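(* Let $G$ and $H$ be finite, simple, connected graphs, each of order at least $2$. The direct product $G \times H$ is well-dominated if and only if $G\times H$ is isomorphic to $K_3\times K_3$, or $G\times H$ is isomorphic to $K_2\times C_4$, or $G \times H$ is isomorphic to $K_2 \times (F \odot K_1)$ for some connected graph $F$.
   Context: A set $D$ of vertices of a graph is dominating if every vertex is in $D$ or adjacent to a vertex of $D$. A graph is well-dominated if every minimal (with respect to inclusion) dominating set is a minimum dominating set, i.e. $\gamma(G)=\Gamma(G)$, where $\gamma$ and $\Gamma$ denote the smallest and largest cardinality of a minimal dominating set. The direct product $G\times H$ has vertex set $V(G)\times V(H)$, with $(g_1,h_1)$ adjacent to $(g_2,h_2)$ iff $g_1g_2\in E(G)$ and $h_1h_2\in E(H)$. The corona $F\odot K_1$ is obtained from $F$ by adding, for each vertex $u$ of $F$, a new vertex $u'$ and the edge $uu'$. The paper's standing assumption is that all graphs are finite, undirected, simple and of order at least $2$. *)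

theory Defs
  imports Main
begin

definition simple_graph :: "'a set \<Rightarrow> ('a \<times> 'a) set \<Rightarrow> bool" where
  "simple_graph V E \<longleftrightarrow> finite V \<and> E \<subseteq> V \<times> V \<and> sym E \<and> irrefl E"

definition connected_graph :: "'a set \<Rightarrow> ('a \<times> 'a) set \<Rightarrow> bool" where
  "connected_graph V E \<longleftrightarrow> V \<noteq> {} \<and> (\<forall>u\<in>V. \<forall>v\<in>V. (u, v) \<in> E\<^sup>*)"

definition dominating :: "'a set \<Rightarrow> ('a \<times> 'a) set \<Rightarrow> 'a set \<Rightarrow> bool" where
  "dominating V E D \<longleftrightarrow> D \<subseteq> V \<and> (\<forall>v\<in>V. v \<in> D \<or> (\<exists>u\<in>D. (u, v) \<in> E))"

definition minimal_dominating :: "'a set \<Rightarrow> ('a \<times> 'a) set \<Rightarrow> 'a set \<Rightarrow> bool" where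
  "minimal_dominating V E D \<longleftrightarrow> dominating V E D \<and> (\<forall>D'. D' \<subset> D \<longrightarrow> \<not> dominating V E D')"

definition minimum_dominating :: "'a set \<Rightarrow> ('a \<times> 'a) set \<Rightarrow> 'a set \<Rightarrow> bool" where
  "minimum_dominating V E D \<longleftrightarrow> dominating V E D \<and> (\<forall>D'. dominating V E D' \<longrightarrow> card D \<le> card D')"

definition well_dominated :: "'a set \<Rightarrow> ('a \<times> 'a) set \<Rightarrow> bool" where
  "well_dominated V E \<longleftrightarrow> (\<forall>D. minimal_dominating V E D \<longrightarrow> minimum_dominating V E D)"

definition graph_iso :: "'a set \<Rightarrow> ('a \<times> 'a) set \<Rightarrow> 'b set \<Rightarrow> ('b \<times> 'b) set \<Rightarrow> bool" where
  "graph_iso V1 E1 V2 E2 \<longleftrightarrow> (\<exists>f. bij_betw f V1 V2 \<and>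
      (\<forall>u\<in>V1. \<forall>v\<in>V1. (u, v) \<in> E1 \<longleftrightarrow> (f u, f v) \<in> E2))"

definition dprod_verts :: "'a set \<Rightarrow> 'b set \<Rightarrow> ('a \<times> 'b) set" where
  "dprod_verts V1 V2 = V1 \<times> V2"

definition dprod_edges :: "('a \<times> 'a) set \<Rightarrow> ('b \<times> 'b) set \<Rightarrow> (('a \<times> 'b) \<times> ('a \<times> 'b)) set" where
  "dprod_edges E1 E2 = {((g1, h1), (g2, h2)). (g1, g2) \<in> E1 \<and> (h1, h2) \<in> E2}"

definition K_verts :: "nat \<Rightarrow> nat set" where
  "K_verts n = {0..<n}"

definition K_edges :: "nat \<Rightarrow> (nat \<times> nat) set" where
  "K_edges n = {(i, j). i < n \<and> j < n \<and> i \<noteq> j}"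

definition C_verts :: "nat \<Rightarrow> nat set" where
  "C_verts n = {0..<n}"

definition C_edges :: "nat \<Rightarrow> (nat \<times> nat) set" where
  "C_edges n = {(i, j). i < n \<and> j < n \<and> (j = (i + 1) mod n \<or> i = (j + 1) mod n)}"

text \<open>Corona F \<odot> K_1: vertex (u, False) is the original u, (u, True) is the new pendant u'.\<close>
definition corona_verts :: "'a set \<Rightarrow> ('a \<times> bool) set" where
  "corona_verts V = V \<times> UNIV"

definition corona_edges :: "'a set \<Rightarrow> ('a \<times> 'a) set \<Rightarrow> (('a \<times> bool) \<times> ('a \<times> bool)) set" where
  "corona_edges V E =
     {((u, False), (v, False)) | u v. (u, v) \<in> E}
     \<union> {((u, False), (u, True)) | u. u \<in> V}
     \<union> {((u, True), (u, False)) | u. u \<in> V}"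

end

theory Submission
  imports Defs
begin

(* Sufficiency: K3 x K3 and K2 x C4 are checked exhaustively. The vertices of K2 x (F o K1) pair
   off along edges having a leaf at one end, and a minimal dominating set contains exactly one end
   of each such edge, so all minimal dominating sets have the same size.

   Necessity: if A is an independent dominating set of G, then A x V(H) is a minimal dominating
   set of G x H, and so is V(G) x B for B independent dominating in H; well-dominatedness makes all
   of them equally large. If H contains a path y z h, trading (a, y), (a, h) for a single vertex
   shows that each a in A has a private neighbour, and exchanging {a} x V(H) for
   ({a} + pn(a)) x B gives |V(H)| = |B| (1 + |pn(a)|). So the private neighbourhoods of A all have
   the same size, hence by counting they cover V(G) - A; consequently no vertex of G has two
   non-adjacent neighbours, and G is complete. If both factors have at least three vertices, both
   are complete, and a minimal dominating set of size 3 in K_m x K_n forces m = n = 3. If G = K2,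
   comparing {g0} x V(H) with suitable dominating sets shows that no two leaves of H share their
   neighbour and that every path v u a of H extends to a square in a controlled way; this makes
   H a 4-cycle if it has no leaves, and a corona otherwise. *)

lemma dprod_edges_iff [simp]:
  "((a, b), (c, d)) \<in> dprod_edges E1 E2 \<longleftrightarrow> (a, c) \<in> E1 \<and> (b, d) \<in> E2"
  by (simp add: dprod_edges_def)

lemma dominating_superset:
  "dominating V E D \<Longrightarrow> D \<subseteq> D' \<Longrightarrow> D' \<subseteq> V \<Longrightarrow> dominating V E D'"
  unfolding dominating_def by blast

lemma minimal_dominating_iff_remove:
  "minimal_dominating V E D \<longleftrightarrow> dominating V E D \<and> (\<forall>x\<in>D. \<not> dominating V E (D - {x}))"
proof
  assume "minimal_dominating V E D"
  then show "dominating V E D \<and> (\<forall>x\<in>D. \<not> dominating V E (D - {x}))"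
    unfolding minimal_dominating_def by blast
next
  assume D: "dominating V E D \<and> (\<forall>x\<in>D. \<not> dominating V E (D - {x}))"
  have "\<not> dominating V E D'" if "D' \<subset> D" for D'
  proof
    assume "dominating V E D'"
    moreover obtain x where "x \<in> D" "D' \<subseteq> D - {x}" using \<open>D' \<subset> D\<close> by blast
    moreover have "D - {x} \<subseteq> V" using D unfolding dominating_def by blast
    ultimately show False using D dominating_superset by metis
  qed
  with D show "minimal_dominating V E D" unfolding minimal_dominating_def by blast
qed

lemma dominating_contains_minimal:
  assumes "dominating V E D" "finite D"
  obtains D' where "D' \<subseteq> D" "minimal_dominating V E D'"
proof -
  let ?C = "{X. X \<subseteq> D \<and> dominating V E X}"
  have "finite ?C" using \<open>finite D\<close> by simp
  moreover have "D \<in> ?C" using assms by blast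
  ultimately obtain X where X: "X \<in> ?C" "\<forall>Y\<in>?C. Y \<subseteq> X \<longrightarrow> X = Y"
    using finite_has_minimal[of ?C] by blast
  then have "minimal_dominating V E X"
    unfolding minimal_dominating_def by (blast dest: psubset_imp_subset)
  with X that show thesis by blast
qed

lemma well_dominated_card_le:
  "well_dominated V E \<Longrightarrow> minimal_dominating V E D \<Longrightarrow> dominating V E D' \<Longrightarrow> card D \<le> card D'"
  unfolding well_dominated_def minimum_dominating_def by blast

lemma well_dominated_card_eq:
  assumes "well_dominated V E" "minimal_dominating V E D1" "minimal_dominating V E D2"
  shows "card D1 = card D2"
  using assms well_dominated_card_le[OF assms(1)]
  by (meson le_antisym minimal_dominating_def)

lemma well_dominatedI:
  assumes "finite V" and "\<And>D. minimal_dominating V E D \<Longrightarrow> card D = c"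
  shows "well_dominated V E"
  unfolding well_dominated_def minimum_dominating_def
proof (intro allI impI conjI)
  fix D assume "minimal_dominating V E D"
  then show "dominating V E D" unfolding minimal_dominating_def by blast
next
  fix D D' assume D: "minimal_dominating V E D" and D': "dominating V E D'"
  have "finite D'" using D' \<open>finite V\<close> unfolding dominating_def by (meson finite_subset)
  with D' obtain D'' where "D'' \<subseteq> D'" "minimal_dominating V E D''"
    by (rule dominating_contains_minimal)
  then have "card D'' \<le> card D'" and "card D'' = c"
    using assms(2) card_mono[OF \<open>finite D'\<close>] by auto
  then show "card D \<le> card D'" using assms(2)[OF D] by simp
qed

definition independent :: "('a \<times> 'a) set \<Rightarrow> 'a set \<Rightarrow> bool" where
  "independent E S \<longleftrightarrow> (\<forall>x\<in>S. \<forall>y\<in>S. (x, y) \<notin> E)"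

definition independent_dominating :: "'a set \<Rightarrow> ('a \<times> 'a) set \<Rightarrow> 'a set \<Rightarrow> bool" where
  "independent_dominating V E S \<longleftrightarrow> independent E S \<and> dominating V E S"

lemma independent_dominating_imp_minimal:
  assumes "independent_dominating V E S"
  shows "minimal_dominating V E S"
  unfolding minimal_dominating_iff_remove
proof (intro conjI ballI)
  show "dominating V E S" using assms unfolding independent_dominating_def by blast
  fix x assume "x \<in> S"
  then have "x \<in> V" and "\<forall>u\<in>S. (u, x) \<notin> E"
    using assms unfolding independent_dominating_def independent_def dominating_def by blast+
  then show "\<not> dominating V E (S - {x})" unfolding dominating_def by blast
qed

lemma independent_extends_to_independent_dominating:
  assumes "simple_graph V E" "S \<subseteq> V" "independent E S"
  obtains T where "S \<subseteq> T" "independent_dominating V E T"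
proof -
  have "finite V" "sym E" "irrefl E" using assms(1) unfolding simple_graph_def by auto
  let ?F = "{T. S \<subseteq> T \<and> T \<subseteq> V \<and> independent E T}"
  have "?F \<subseteq> Pow V" by blast
  then have "finite ?F" using \<open>finite V\<close> by (simp add: finite_subset)
  moreover have "S \<in> ?F" using assms by blast
  ultimately obtain T where T: "T \<in> ?F" and max: "\<forall>T'\<in>?F. T \<subseteq> T' \<longrightarrow> T = T'"
    using finite_has_maximal[of ?F] by blast
  have "dominating V E T" unfolding dominating_def
  proof (intro conjI ballI)
    show "T \<subseteq> V" using T by blast
    fix v assume "v \<in> V"
    show "v \<in> T \<or> (\<exists>u\<in>T. (u, v) \<in> E)"
    proof (rule ccontr)
      assume v: "\<not> (v \<in> T \<or> (\<exists>u\<in>T. (u, v) \<in> E))"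
      then have "\<forall>u\<in>T. (v, u) \<notin> E" using \<open>sym E\<close> by (blast dest: symD)
      with v T \<open>irrefl E\<close> have "independent E (insert v T)"
        unfolding independent_def irrefl_def by blast
      with T \<open>v \<in> V\<close> have "insert v T \<in> ?F" by blast
      with max have "T = insert v T" by blast
      with v show False by blast
    qed
  qed
  with T that show thesis unfolding independent_dominating_def by blast
qed

lemma independent_dominating_exists:
  assumes "simple_graph V E"
  obtains T where "independent_dominating V E T"
  using independent_extends_to_independent_dominating[OF assms, of "{}"]
  by (auto simp: independent_def)

lemma independent_dominating_universal_vertex:
  assumes "g \<in> V" "(g, g) \<notin> E" "\<And>v. v \<in> V \<Longrightarrow> v \<noteq> g \<Longrightarrow> (g, v) \<in> E"
  shows "independent_dominating V E {g}"
  using assms unfolding independent_dominating_def independent_def dominating_def by blast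

lemma simple_graph_sym: "simple_graph V E \<Longrightarrow> (u, v) \<in> E \<Longrightarrow> (v, u) \<in> E"
  unfolding simple_graph_def by (blast dest: symD)

lemma simple_graph_irrefl: "simple_graph V E \<Longrightarrow> (u, u) \<notin> E"
  unfolding simple_graph_def irrefl_def by blast

lemma simple_graph_edge_in: "simple_graph V E \<Longrightarrow> (u, v) \<in> E \<Longrightarrow> u \<in> V \<and> v \<in> V"
  unfolding simple_graph_def by blast

lemma connected_graph_has_nbr:
  assumes "connected_graph V E" "card V \<ge> 2" "v \<in> V"
  obtains u where "(v, u) \<in> E"
proof -
  have "\<not> V \<subseteq> {v}"
  proof
    assume "V \<subseteq> {v}"
    then have "card V \<le> 1" using card_mono[of "{v}" V] by simp
    with assms(2) show False by simp
  qed
  then obtain w where "w \<in> V" "w \<noteq> v" by blast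
  moreover have "(v, w) \<in> E\<^sup>*" using assms(1,3) \<open>w \<in> V\<close> unfolding connected_graph_def by blast
  ultimately show thesis using that by (auto elim: converse_rtranclE)
qed

lemma connected_graph_closed_subset:
  assumes "connected_graph V E" "s \<in> S" "s \<in> V" "\<And>x y. x \<in> S \<Longrightarrow> (x, y) \<in> E \<Longrightarrow> y \<in> S"
  shows "V \<subseteq> S"
proof
  fix w assume "w \<in> V"
  then have "(s, w) \<in> E\<^sup>*" using assms(1,3) unfolding connected_graph_def by blast
  then show "w \<in> S" by (induction rule: rtrancl_induct) (use assms in blast)+
qed

lemma connected_graph_path3:
  assumes "simple_graph V E" "connected_graph V E" "card V \<ge> 3"
  obtains y z h where "(y, z) \<in> E" "(z, h) \<in> E" "h \<noteq> y"
proof (rule ccontr)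
  assume no_path: "\<not> thesis"
  have "V \<noteq> {}" using assms(3) by auto
  then obtain v where "v \<in> V" by blast
  moreover have "card V \<ge> 2" using assms(3) by simp
  ultimately obtain z where vz: "(v, z) \<in> E" using connected_graph_has_nbr[OF assms(2)] by blast
  have "(z, h) \<in> E \<Longrightarrow> h = v" "(v, h) \<in> E \<Longrightarrow> h = z" for h
    using no_path that vz simple_graph_sym[OF assms(1)] by blast+
  then have "V \<subseteq> {v, z}" using connected_graph_closed_subset[OF assms(2), of v "{v, z}"] \<open>v \<in> V\<close> by blast
  then have "card V \<le> card {v, z}" by (intro card_mono) auto
  also have "\<dots> \<le> 2" by (cases "v = z") auto
  finally have "card V \<le> 2" .
  with assms(3) show False by simp
qed

lemma complete_if_triangle_closed:
  assumes "connected_graph V E" "sym E"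
    and closed: "\<And>v x w. (v, x) \<in> E \<Longrightarrow> (v, w) \<in> E \<Longrightarrow> x \<noteq> w \<Longrightarrow> (x, w) \<in> E"
  shows "\<forall>u\<in>V. \<forall>w\<in>V. u \<noteq> w \<longrightarrow> (u, w) \<in> E"
proof (intro ballI impI)
  fix u w assume "u \<in> V" "w \<in> V" "u \<noteq> w"
  then have "(u, w) \<in> E\<^sup>*" using assms(1) unfolding connected_graph_def by blast
  then have "w = u \<or> (u, w) \<in> E"
  proof (induction rule: rtrancl_induct)
    case (step x y)
    then show ?case using closed[of x u y] \<open>sym E\<close> by (metis symD)
  qed simp
  with \<open>u \<noteq> w\<close> show "(u, w) \<in> E" by simp
qed

definition leaf :: "('a \<times> 'a) set \<Rightarrow> 'a \<Rightarrow> bool" where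
  "leaf E w \<longleftrightarrow> (\<exists>u. \<forall>x. (w, x) \<in> E \<longleftrightarrow> x = u)"

lemma leaf_nbr_unique: "leaf E w \<Longrightarrow> (w, x) \<in> E \<Longrightarrow> (w, y) \<in> E \<longleftrightarrow> y = x"
  unfolding leaf_def by auto

lemma graph_iso_sym:
  assumes "graph_iso V1 E1 V2 E2"
  shows "graph_iso V2 E2 V1 E1"
proof -
  from assms obtain f where f: "bij_betw f V1 V2"
    and E: "\<forall>u\<in>V1. \<forall>v\<in>V1. (u, v) \<in> E1 \<longleftrightarrow> (f u, f v) \<in> E2"
    unfolding graph_iso_def by blast
  let ?g = "inv_into V1 f"
  have "bij_betw ?g V2 V1" using f by (rule bij_betw_inv_into)
  moreover have "(u, v) \<in> E2 \<longleftrightarrow> (?g u, ?g v) \<in> E1" if "u \<in> V2" "v \<in> V2" for u v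
  proof -
    have "?g u \<in> V1" "?g v \<in> V1" "f (?g u) = u" "f (?g v) = v"
      using f that by (auto simp: bij_betw_def f_inv_into_f)
    then show ?thesis using E by metis
  qed
  ultimately show ?thesis unfolding graph_iso_def by blast
qed

lemma graph_iso_trans:
  assumes "graph_iso V1 E1 V2 E2" "graph_iso V2 E2 V3 E3"
  shows "graph_iso V1 E1 V3 E3"
proof -
  from assms obtain f g where "bij_betw f V1 V2" "bij_betw g V2 V3"
    and "\<forall>u\<in>V1. \<forall>v\<in>V1. (u, v) \<in> E1 \<longleftrightarrow> (f u, f v) \<in> E2"
    and "\<forall>u\<in>V2. \<forall>v\<in>V2. (u, v) \<in> E2 \<longleftrightarrow> (g u, g v) \<in> E3"
    unfolding graph_iso_def by blast
  then have "bij_betw (g \<circ> f) V1 V3"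
    and "\<forall>u\<in>V1. \<forall>v\<in>V1. (u, v) \<in> E1 \<longleftrightarrow> ((g \<circ> f) u, (g \<circ> f) v) \<in> E3"
    by (auto simp: bij_betw_trans bij_betw_apply)
  then show ?thesis unfolding graph_iso_def by blast
qed

lemma graph_iso_dprod:
  assumes "graph_iso V1 E1 W1 F1" "graph_iso V2 E2 W2 F2"
  shows "graph_iso (dprod_verts V1 V2) (dprod_edges E1 E2) (dprod_verts W1 W2) (dprod_edges F1 F2)"
proof -
  from assms obtain f g where "bij_betw f V1 W1" "bij_betw g V2 W2"
    and "\<forall>u\<in>V1. \<forall>v\<in>V1. (u, v) \<in> E1 \<longleftrightarrow> (f u, f v) \<in> F1"
    and "\<forall>u\<in>V2. \<forall>v\<in>V2. (u, v) \<in> E2 \<longleftrightarrow> (g u, g v) \<in> F2"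
    unfolding graph_iso_def by blast
  then have "bij_betw (map_prod f g) (V1 \<times> V2) (W1 \<times> W2)
    \<and> (\<forall>u\<in>V1 \<times> V2. \<forall>v\<in>V1 \<times> V2.
         (u, v) \<in> dprod_edges E1 E2 \<longleftrightarrow> (map_prod f g u, map_prod f g v) \<in> dprod_edges F1 F2)"
    by (auto intro: bij_betw_map_prod)
  then show ?thesis unfolding graph_iso_def dprod_verts_def by blast
qed

lemma graph_iso_dprod_swap:
  "graph_iso (dprod_verts V1 V2) (dprod_edges E1 E2) (dprod_verts V2 V1) (dprod_edges E2 E1)"
proof -
  have "bij_betw prod.swap (V1 \<times> V2) (V2 \<times> V1)"
    by (rule bij_betw_byWitness[where f' = prod.swap]) auto
  then show ?thesis unfolding graph_iso_def dprod_verts_def by auto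
qed

lemma dominating_image_iff:
  assumes f: "bij_betw f V1 V2" "\<forall>u\<in>V1. \<forall>v\<in>V1. (u, v) \<in> E1 \<longleftrightarrow> (f u, f v) \<in> E2"
    and "D \<subseteq> V1"
  shows "dominating V2 E2 (f ` D) \<longleftrightarrow> dominating V1 E1 D"
proof -
  have "f ` D \<subseteq> V2" using f(1) \<open>D \<subseteq> V1\<close> by (auto simp: bij_betw_def)
  moreover have "f v \<in> f ` D \<longleftrightarrow> v \<in> D" if "v \<in> V1" for v
    using f(1) \<open>D \<subseteq> V1\<close> that by (auto simp: bij_betw_def inj_on_def)
  moreover have "(\<exists>u\<in>f ` D. (u, f v) \<in> E2) \<longleftrightarrow> (\<exists>u\<in>D. (u, v) \<in> E1)" if "v \<in> V1" for v
    using f(2) \<open>D \<subseteq> V1\<close> that by blast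
  moreover have "V2 = f ` V1" using f(1) by (simp add: bij_betw_def)
  ultimately show ?thesis using \<open>D \<subseteq> V1\<close> unfolding dominating_def by auto
qed

lemma well_dominated_graph_iso:
  assumes iso: "graph_iso V1 E1 V2 E2" and "finite V1" and wd: "well_dominated V2 E2"
  shows "well_dominated V1 E1"
proof -
  from iso obtain f where f: "bij_betw f V1 V2" "\<forall>u\<in>V1. \<forall>v\<in>V1. (u, v) \<in> E1 \<longleftrightarrow> (f u, f v) \<in> E2"
    unfolding graph_iso_def by blast
  have inj: "inj_on f V1" using f(1) by (simp add: bij_betw_def)
  have dom: "dominating V2 E2 (f ` D) \<longleftrightarrow> dominating V1 E1 D" if "D \<subseteq> V1" for D
    using dominating_image_iff[OF f that] .
  have min: "minimal_dominating V2 E2 (f ` D)" if D: "minimal_dominating V1 E1 D" for D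
    unfolding minimal_dominating_iff_remove
  proof (intro conjI ballI)
    have "D \<subseteq> V1" using D unfolding minimal_dominating_def dominating_def by blast
    then show "dominating V2 E2 (f ` D)" using D dom unfolding minimal_dominating_def by blast
    fix y assume "y \<in> f ` D"
    then obtain x where "x \<in> D" "y = f x" by blast
    then have "f ` D - {y} = f ` (D - {x})" using inj \<open>D \<subseteq> V1\<close> by (auto simp: inj_on_def)
    with \<open>x \<in> D\<close> \<open>D \<subseteq> V1\<close> D show "\<not> dominating V2 E2 (f ` D - {y})"
      using dom[of "D - {x}"] unfolding minimal_dominating_iff_remove by auto
  qed
  obtain c where c: "card D = c" if "minimal_dominating V2 E2 D" for D
    using well_dominated_card_eq[OF wd] by metis
  show ?thesis
  proof (rule well_dominatedI[OF \<open>finite V1\<close>])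
    fix D assume D: "minimal_dominating V1 E1 D"
    then have "D \<subseteq> V1" unfolding minimal_dominating_def dominating_def by blast
    then show "card D = c" using c[OF min[OF D]] card_image[OF inj_on_subset[OF inj]] by simp
  qed
qed

lemma well_dominated_dprod_swap:
  assumes "finite V1" "finite V2" "well_dominated (dprod_verts V1 V2) (dprod_edges E1 E2)"
  shows "well_dominated (dprod_verts V2 V1) (dprod_edges E2 E1)"
  using well_dominated_graph_iso[OF graph_iso_dprod_swap _ assms(3)] assms(1,2)
  by (simp add: dprod_verts_def)

lemma connected_graph_iso:
  assumes iso: "graph_iso V1 E1 V2 E2" and "E2 \<subseteq> V2 \<times> V2" and "connected_graph V2 E2"
  shows "connected_graph V1 E1"
proof -
  from iso obtain f where f: "bij_betw f V1 V2" "\<forall>u\<in>V1. \<forall>v\<in>V1. (u, v) \<in> E1 \<longleftrightarrow> (f u, f v) \<in> E2"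
    unfolding graph_iso_def by blast
  let ?g = "inv_into V1 f"
  have g: "?g y \<in> V1" "f (?g y) = y" if "y \<in> V2" for y
    using f(1) that by (auto simp: bij_betw_def f_inv_into_f inv_into_into)
  have reach: "(u, ?g y) \<in> E1\<^sup>*" if "(f u, y) \<in> E2\<^sup>*" "u \<in> V1" for u y
    using that(1)
  proof (induction rule: rtrancl_induct)
    case base
    then show ?case using f(1) \<open>u \<in> V1\<close> by (simp add: bij_betw_inv_into_left)
  next
    case (step y z)
    then have "y \<in> V2" "z \<in> V2" using \<open>E2 \<subseteq> V2 \<times> V2\<close> by auto
    then have "(?g y, ?g z) \<in> E1" using f(2) g step(2) by metis
    with step(3) show ?case by simp
  qed
  show ?thesis unfolding connected_graph_def
  proof (intro conjI ballI)
    show "V1 \<noteq> {}" using assms(3) f(1) unfolding connected_graph_def by (auto simp: bij_betw_def)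
    fix u v assume "u \<in> V1" "v \<in> V1"
    then have "(f u, f v) \<in> E2\<^sup>*" using assms(3) f(1) by (auto simp: connected_graph_def bij_betw_def)
    then have "(u, ?g (f v)) \<in> E1\<^sup>*" using reach \<open>u \<in> V1\<close> by blast
    then show "(u, v) \<in> E1\<^sup>*" using f(1) \<open>v \<in> V1\<close> by (simp add: bij_betw_inv_into_left)
  qed
qed

lemma simple_connected_graph_copy_on_nat:
  assumes "simple_graph V E" "connected_graph V E"
  obtains VF :: "nat set" and EF
  where "simple_graph VF EF" "connected_graph VF EF" "graph_iso VF EF V E"
proof -
  obtain \<sigma> where \<sigma>: "bij_betw \<sigma> {0..<card V} V"
    using ex_bij_betw_nat_finite assms(1) unfolding simple_graph_def by blast
  define EF where "EF = {(i, j). i < card V \<and> j < card V \<and> (\<sigma> i, \<sigma> j) \<in> E}"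
  have "simple_graph {0..<card V} EF"
    using simple_graph_sym[OF assms(1)] simple_graph_irrefl[OF assms(1)]
    unfolding simple_graph_def EF_def sym_def irrefl_def by auto
  moreover have iso: "graph_iso {0..<card V} EF V E"
    using \<sigma> unfolding graph_iso_def EF_def by auto
  moreover have "connected_graph {0..<card V} EF"
    using connected_graph_iso[OF iso _ assms(2)] assms(1) unfolding simple_graph_def by blast
  ultimately show thesis using that by blast
qed

lemma complete_graph_iso_K:
  assumes "simple_graph V E" "\<forall>u\<in>V. \<forall>w\<in>V. u \<noteq> w \<longrightarrow> (u, w) \<in> E" "card V = n"
  shows "graph_iso V E (K_verts n) (K_edges n)"
proof -
  obtain f where f: "bij_betw f V {0..<n}"
    using ex_bij_betw_finite_nat assms(1,3) unfolding simple_graph_def by blast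
  have "(u, v) \<in> E \<longleftrightarrow> (f u, f v) \<in> K_edges n" if "u \<in> V" "v \<in> V" for u v
  proof -
    have "f u < n" "f v < n" "f u = f v \<longleftrightarrow> u = v"
      using f that by (auto simp: bij_betw_def inj_on_def)
    moreover have "(u, v) \<in> E \<longleftrightarrow> u \<noteq> v" using assms(2) that simple_graph_irrefl[OF assms(1)] by blast
    ultimately show ?thesis by (auto simp: K_edges_def)
  qed
  with f show ?thesis unfolding graph_iso_def K_verts_def by blast
qed

lemma graph_iso_C4:
  assumes V: "V = {v0, v1, v2, v3}"
    and distinct: "v0 \<noteq> v1" "v0 \<noteq> v2" "v0 \<noteq> v3" "v1 \<noteq> v2" "v1 \<noteq> v3" "v2 \<noteq> v3"
    and E: "E = {(v0, v1), (v1, v0), (v1, v2), (v2, v1), (v2, v3), (v3, v2), (v3, v0), (v0, v3)}"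
  shows "graph_iso V E (C_verts 4) (C_edges 4)"
proof (rule graph_iso_sym)
  define g where "g i = (if i = 0 then v0 else if i = 1 then v1 else if i = 2 then v2 else v3)"
    for i :: nat
  have C4: "i \<in> C_verts 4 \<longleftrightarrow> i = 0 \<or> i = 1 \<or> i = 2 \<or> i = 3" for i
    by (auto simp: C_verts_def)
  have "bij_betw g (C_verts 4) V"
  proof (rule bij_betw_imageI)
    show "inj_on g (C_verts 4)"
    proof (rule inj_onI)
      fix i j assume "i \<in> C_verts 4" "j \<in> C_verts 4" "g i = g j"
      then show "i = j" unfolding C4 g_def using distinct by (elim disjE) simp_all
    qed
    have "C_verts 4 = {0, 1, 2, 3}" using C4 by blast
    then show "g ` C_verts 4 = V" unfolding V g_def by auto
  qed
  moreover have "(i, j) \<in> C_edges 4 \<longleftrightarrow> (g i, g j) \<in> E" if "i \<in> C_verts 4" "j \<in> C_verts 4" for i j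
    using that distinct unfolding C4 by (elim disjE) (simp_all add: C_edges_def E g_def)
  ultimately show "graph_iso (C_verts 4) (C_edges 4) V E" unfolding graph_iso_def by blast
qed

lemma corona_edges_iff [simp]:
  "((u, b), (v, c)) \<in> corona_edges V E \<longleftrightarrow>
     (\<not> b \<and> \<not> c \<and> (u, v) \<in> E) \<or> (\<not> b \<and> c \<and> u = v \<and> u \<in> V) \<or> (b \<and> \<not> c \<and> u = v \<and> u \<in> V)"
  unfolding corona_edges_def by auto

lemma graph_iso_corona_cong:
  assumes "graph_iso V1 E1 V2 E2"
  shows "graph_iso (corona_verts V1) (corona_edges V1 E1) (corona_verts V2) (corona_edges V2 E2)"
proof -
  from assms obtain f where f: "bij_betw f V1 V2" "\<forall>u\<in>V1. \<forall>v\<in>V1. (u, v) \<in> E1 \<longleftrightarrow> (f u, f v) \<in> E2"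
    unfolding graph_iso_def by blast
  have "bij_betw (map_prod f id) (V1 \<times> UNIV) (V2 \<times> UNIV)"
    using f(1) bij_betw_id by (rule bij_betw_map_prod)
  moreover have "(p, q) \<in> corona_edges V1 E1 \<longleftrightarrow> (map_prod f id p, map_prod f id q) \<in> corona_edges V2 E2"
    if "p \<in> V1 \<times> UNIV" "q \<in> V1 \<times> UNIV" for p q
    using that f by (cases p; cases q) (auto simp: bij_betw_def inj_on_def)
  ultimately show ?thesis unfolding graph_iso_def corona_verts_def by blast
qed

lemma graph_iso_corona:
  assumes "simple_graph V E" "S \<subseteq> V" and pend: "bij_betw pend S (V - S)"
    and leaf: "\<And>s x. s \<in> S \<Longrightarrow> (pend s, x) \<in> E \<longleftrightarrow> x = s"
  shows "graph_iso (corona_verts S) (corona_edges S (E \<inter> S \<times> S)) V E"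
proof -
  define \<phi> where "\<phi> p = (if snd p then pend (fst p) else fst p)" for p
  have pendS: "pend s \<in> V - S" if "s \<in> S" for s using pend that by (auto simp: bij_betw_def)
  have "bij_betw \<phi> (S \<times> UNIV) V"
  proof (rule bij_betw_imageI)
    have "inj_on pend S" using pend by (simp add: bij_betw_def)
    show "inj_on \<phi> (S \<times> UNIV)"
    proof (rule inj_onI)
      fix p q assume "p \<in> S \<times> UNIV" "q \<in> S \<times> UNIV" "\<phi> p = \<phi> q"
      with \<open>inj_on pend S\<close> pendS show "p = q" unfolding \<phi>_def inj_on_def
        by (cases p; cases q; cases "snd p"; cases "snd q") auto
    qed
    show "\<phi> ` (S \<times> UNIV) = V"
    proof
      show "\<phi> ` (S \<times> UNIV) \<subseteq> V" using pendS \<open>S \<subseteq> V\<close> unfolding \<phi>_def by auto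
      show "V \<subseteq> \<phi> ` (S \<times> UNIV)"
      proof
        fix v assume "v \<in> V"
        show "v \<in> \<phi> ` (S \<times> UNIV)"
        proof (cases "v \<in> S")
          case True
          then show ?thesis by (intro image_eqI[of _ _ "(v, False)"]) (auto simp: \<phi>_def)
        next
          case False
          then obtain s where "s \<in> S" "v = pend s" using pend \<open>v \<in> V\<close> unfolding bij_betw_def by blast
          then show ?thesis by (intro image_eqI[of _ _ "(s, True)"]) (auto simp: \<phi>_def)
        qed
      qed
    qed
  qed
  moreover have "(p, q) \<in> corona_edges S (E \<inter> S \<times> S) \<longleftrightarrow> (\<phi> p, \<phi> q) \<in> E"
    if "p \<in> S \<times> UNIV" "q \<in> S \<times> UNIV" for p q
  proof -
    obtain s b t c where "p = (s, b)" "q = (t, c)" by (meson surj_pair)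
    with that have pq: "p = (s, b)" "q = (t, c)" "s \<in> S" "t \<in> S" by auto
    have "(s, pend t) \<in> E \<longleftrightarrow> (pend t, s) \<in> E" using simple_graph_sym[OF assms(1)] by blast
    then have "(s, pend t) \<in> E \<longleftrightarrow> s = t" using leaf[OF pq(4)] by auto
    moreover have "(pend s, pend t) \<notin> E" using leaf[OF pq(3)] pendS[OF pq(4)] pq(3) by auto
    moreover have "(pend s, t) \<in> E \<longleftrightarrow> s = t" using leaf[OF pq(3)] by auto
    ultimately show ?thesis using pq unfolding \<phi>_def by (cases b; cases c) auto
  qed
  ultimately show ?thesis unfolding graph_iso_def corona_verts_def by blast
qed

lemma connected_graph_restrict_to_supports:
  assumes "simple_graph V E" "connected_graph V E" "S \<subseteq> V" "S \<noteq> {}"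
    and pendant: "\<And>w x. w \<in> V - S \<Longrightarrow> (w, x) \<in> E \<Longrightarrow> x \<in> S \<and> (\<forall>y. (w, y) \<in> E \<longrightarrow> y = x)"
  shows "connected_graph S (E \<inter> S \<times> S)"
  unfolding connected_graph_def
proof (intro conjI ballI)
  show "S \<noteq> {}" by fact
  fix s t assume "s \<in> S" "t \<in> S"
  let ?F = "E \<inter> S \<times> S"
  \<comment> \<open>a vertex outside \<open>S\<close> is represented by its unique neighbour, which lies in \<open>S\<close>\<close>
  have "(w \<in> S \<longrightarrow> (s, w) \<in> ?F\<^sup>*) \<and> (w \<notin> S \<longrightarrow> (\<forall>x. (w, x) \<in> E \<longrightarrow> (s, x) \<in> ?F\<^sup>*))"
    if "(s, w) \<in> E\<^sup>*" for w
    using that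
  proof (induction rule: rtrancl_induct)
    case base
    then show ?case using \<open>s \<in> S\<close> by simp
  next
    case (step w w')
    have "w \<in> V" "w' \<in> V" using step(2) assms(1) unfolding simple_graph_def by auto
    have w'w: "(w', w) \<in> E" using simple_graph_sym[OF assms(1) step(2)] .
    show ?case
    proof (cases "w \<in> S")
      case True
      with step.IH have "(s, w) \<in> ?F\<^sup>*" by blast
      moreover have "(w', x) \<in> E \<Longrightarrow> x = w" if "w' \<notin> S" for x
        using pendant[of w' w] pendant[of w' x] \<open>w' \<in> V\<close> w'w that by blast
      ultimately show ?thesis using True step(2) by (auto intro: rtrancl_into_rtrancl)
    next
      case False
      then have "w' \<in> S" "(s, w') \<in> ?F\<^sup>*" using step pendant \<open>w \<in> V\<close> by blast+
      then show ?thesis by blast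
    qed
  qed
  moreover have "(s, t) \<in> E\<^sup>*" using assms(2,3) \<open>s \<in> S\<close> \<open>t \<in> S\<close> unfolding connected_graph_def by blast
  ultimately show "(s, t) \<in> ?F\<^sup>*" using \<open>t \<in> S\<close> by blast
qed

section \<open>The well-dominated products\<close>

definition list_dominating :: "'a list \<Rightarrow> ('a \<Rightarrow> 'a \<Rightarrow> bool) \<Rightarrow> 'a list \<Rightarrow> bool" where
  "list_dominating vs adj D \<longleftrightarrow> list_all (\<lambda>v. v \<in> set D \<or> list_ex (\<lambda>u. adj u v) D) vs"

definition minimal_dominating_lists_have_length ::
    "'a list \<Rightarrow> ('a \<Rightarrow> 'a \<Rightarrow> bool) \<Rightarrow> nat \<Rightarrow> bool" where
  "minimal_dominating_lists_have_length vs adj c \<longleftrightarrow>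
     list_all (\<lambda>D. list_dominating vs adj D
                   \<and> list_all (\<lambda>x. \<not> list_dominating vs adj (removeAll x D)) D \<longrightarrow> length D = c)
       (subseqs vs)"

lemma list_dominating_iff:
  assumes "\<forall>u\<in>set vs. \<forall>v\<in>set vs. (u, v) \<in> E \<longleftrightarrow> adj u v" "set D \<subseteq> set vs"
  shows "list_dominating vs adj D \<longleftrightarrow> dominating (set vs) E (set D)"
  using assms unfolding list_dominating_def dominating_def list_all_iff list_ex_iff by blast

lemma well_dominated_if_minimal_dominating_lists_have_length:
  assumes "distinct vs" and adj: "\<forall>u\<in>set vs. \<forall>v\<in>set vs. (u, v) \<in> E \<longleftrightarrow> adj u v"
    and "minimal_dominating_lists_have_length vs adj c"
  shows "well_dominated (set vs) E"
proof (rule well_dominatedI)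
  fix D assume D: "minimal_dominating (set vs) E D"
  then have "D \<subseteq> set vs" unfolding minimal_dominating_def dominating_def by blast
  then obtain ds where ds: "ds \<in> set (subseqs vs)" "set ds = D" using subset_subseqs by blast
  have "list_dominating vs adj ds"
    using D ds list_dominating_iff[OF adj] \<open>D \<subseteq> set vs\<close> unfolding minimal_dominating_def by blast
  moreover have "\<not> list_dominating vs adj (removeAll x ds)" if "x \<in> set ds" for x
  proof -
    have "set (removeAll x ds) = D - {x}" "D - {x} \<subseteq> set vs" using ds(2) \<open>D \<subseteq> set vs\<close> by auto
    with D that ds(2) show ?thesis
      using list_dominating_iff[OF adj] unfolding minimal_dominating_iff_remove by metis
  qed
  ultimately have "list_dominating vs adj ds
      \<and> list_all (\<lambda>x. \<not> list_dominating vs adj (removeAll x ds)) ds"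
    by (simp add: list_all_iff)
  then have "length ds = c"
    using assms(3) ds(1) unfolding minimal_dominating_lists_have_length_def list_all_iff by blast
  then show "card D = c"
    using distinct_card[OF subseqs_distinctD[OF ds(1) \<open>distinct vs\<close>]] ds(2) by simp
qed simp

lemma well_dominated_K3_K3:
  "well_dominated (dprod_verts (K_verts 3) (K_verts 3)) (dprod_edges (K_edges 3) (K_edges 3))"
proof -
  let ?vs = "List.product [0..<3] [0..<3]"
  let ?adj = "\<lambda>(a, b) (c, d). a \<noteq> c \<and> b \<noteq> d"
  have check: "minimal_dominating_lists_have_length ?vs ?adj 3" by code_simp
  have vs: "set ?vs = dprod_verts (K_verts 3) (K_verts 3)"
    by (simp add: dprod_verts_def K_verts_def)
  have adj: "\<forall>u\<in>dprod_verts (K_verts 3) (K_verts 3). \<forall>v\<in>dprod_verts (K_verts 3) (K_verts 3).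
      (u, v) \<in> dprod_edges (K_edges 3) (K_edges 3) \<longleftrightarrow> ?adj u v"
    by (auto simp: dprod_verts_def K_verts_def K_edges_def)
  have "distinct ?vs" by (simp add: distinct_product)
  from well_dominated_if_minimal_dominating_lists_have_length[OF this _ check] adj
  show ?thesis unfolding vs by blast
qed

lemma well_dominated_K2_C4:
  "well_dominated (dprod_verts (K_verts 2) (C_verts 4)) (dprod_edges (K_edges 2) (C_edges 4))"
proof -
  let ?vs = "List.product [0..<2] [0..<4]"
  let ?adj = "\<lambda>(a, b) (c, d). a \<noteq> c \<and> (d = (b + 1) mod 4 \<or> b = (d + 1) mod 4)"
  have check: "minimal_dominating_lists_have_length ?vs ?adj 4" by code_simp
  have vs: "set ?vs = dprod_verts (K_verts 2) (C_verts 4)"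
    by (simp add: dprod_verts_def K_verts_def C_verts_def)
  have adj: "\<forall>u\<in>dprod_verts (K_verts 2) (C_verts 4). \<forall>v\<in>dprod_verts (K_verts 2) (C_verts 4).
      (u, v) \<in> dprod_edges (K_edges 2) (C_edges 4) \<longleftrightarrow> ?adj u v"
    by (auto simp: dprod_verts_def K_verts_def C_verts_def K_edges_def C_edges_def)
  have "distinct ?vs" by (simp add: distinct_product)
  from well_dominated_if_minimal_dominating_lists_have_length[OF this _ check] adj
  show ?thesis unfolding vs by blast
qed

lemma minimal_dominating_leaf_support:
  assumes D: "minimal_dominating V E D" and "sym E"
    and leaf: "\<forall>x. (x, w) \<in> E \<longrightarrow> x = m" and "(m, w) \<in> E" "m \<noteq> w" "m \<in> D"
  shows "w \<notin> D"
proof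
  assume "w \<in> D"
  have dom: "dominating V E D" using D unfolding minimal_dominating_def by blast
  have wz: "z = m" if "(w, z) \<in> E" for z using leaf that \<open>sym E\<close> by (blast dest: symD)
  have "dominating V E (D - {w})" unfolding dominating_def
  proof (intro conjI ballI)
    show "D - {w} \<subseteq> V" using dom unfolding dominating_def by blast
    fix z assume "z \<in> V"
    show "z \<in> D - {w} \<or> (\<exists>u\<in>D - {w}. (u, z) \<in> E)"
    proof (cases "z = w")
      case True
      then show ?thesis using \<open>(m, w) \<in> E\<close> \<open>m \<noteq> w\<close> \<open>m \<in> D\<close> by blast
    next
      case False
      from dom \<open>z \<in> V\<close> have "z \<in> D \<or> (\<exists>u\<in>D. (u, z) \<in> E)" unfolding dominating_def by blast
      then show ?thesis using False wz \<open>m \<in> D\<close> \<open>m \<noteq> w\<close> by blast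
    qed
  qed
  with D \<open>w \<in> D\<close> show False unfolding minimal_dominating_iff_remove by blast
qed

lemma card_eq_if_both_transversal:
  assumes "D \<subseteq> V" "R \<subseteq> V" and \<pi>: "\<forall>v\<in>V. \<pi> v \<in> V \<and> \<pi> (\<pi> v) = v"
    and D: "\<forall>v\<in>V. v \<in> D \<longleftrightarrow> \<pi> v \<notin> D" and R: "\<forall>v\<in>V. v \<in> R \<longleftrightarrow> \<pi> v \<notin> R"
  shows "card D = card R"
proof -
  define f where "f d = (if d \<in> R then d else \<pi> d)" for d
  define g where "g r = (if r \<in> D then r else \<pi> r)" for r
  have "f d \<in> R \<and> g (f d) = d" if "d \<in> D" for d
    using that \<open>D \<subseteq> V\<close> \<pi> D R unfolding f_def g_def by (cases "d \<in> R") auto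
  moreover have "g r \<in> D \<and> f (g r) = r" if "r \<in> R" for r
    using that \<open>R \<subseteq> V\<close> \<pi> D R unfolding f_def g_def by (cases "r \<in> D") auto
  ultimately have "bij_betw f D R"
    by (intro bij_betw_byWitness[where f' = g]) blast+
  then show ?thesis by (rule bij_betw_same_card)
qed

text \<open>Every minimal dominating set contains exactly one end of each pendant edge \<open>{v, \<pi> v}\<close>.\<close>
lemma minimal_dominating_card_pendant_pairs:
  assumes "sym E" "irrefl E"
    and \<pi>: "\<And>v. v \<in> V \<Longrightarrow> \<pi> v \<in> V \<and> \<pi> (\<pi> v) = v \<and> (v, \<pi> v) \<in> E"
    and leaf: "\<And>v. v \<in> V \<Longrightarrow> (\<forall>x. (x, v) \<in> E \<longrightarrow> x = \<pi> v) \<or> (\<forall>x. (x, \<pi> v) \<in> E \<longrightarrow> x = v)"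
    and R: "R \<subseteq> V" "\<And>v. v \<in> V \<Longrightarrow> v \<in> R \<longleftrightarrow> \<pi> v \<notin> R"
    and D: "minimal_dominating V E D"
  shows "card D = card R"
proof (rule card_eq_if_both_transversal)
  have dom: "dominating V E D" using D unfolding minimal_dominating_def by blast
  then show "D \<subseteq> V" unfolding dominating_def by blast
  have "v \<in> D \<longleftrightarrow> \<pi> v \<notin> D" if "v \<in> V" for v
  proof -
    have pair: "\<pi> v \<in> V" "v \<noteq> \<pi> v" "(v, \<pi> v) \<in> E" "(\<pi> v, v) \<in> E"
      using \<pi>[OF that] \<open>irrefl E\<close> \<open>sym E\<close> by (auto simp: irrefl_def dest: symD)
    have dom_pair: "v \<in> D \<or> (\<exists>u\<in>D. (u, v) \<in> E)" "\<pi> v \<in> D \<or> (\<exists>u\<in>D. (u, \<pi> v) \<in> E)"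
      using dom \<open>v \<in> V\<close> pair(1) unfolding dominating_def by blast+
    note support = minimal_dominating_leaf_support[OF D \<open>sym E\<close>]
    from leaf[OF that] show ?thesis
    proof
      assume l: "\<forall>x. (x, v) \<in> E \<longrightarrow> x = \<pi> v"
      show ?thesis using support[OF l pair(4)] pair(2) dom_pair(1) l by auto
    next
      assume l: "\<forall>x. (x, \<pi> v) \<in> E \<longrightarrow> x = v"
      show ?thesis using support[OF l pair(3)] pair(2) dom_pair(2) l by auto
    qed
  qed
  then show "\<forall>v\<in>V. v \<in> D \<longleftrightarrow> \<pi> v \<notin> D" by blast
  show "\<forall>v\<in>V. \<pi> v \<in> V \<and> \<pi> (\<pi> v) = v" "\<forall>v\<in>V. v \<in> R \<longleftrightarrow> \<pi> v \<notin> R"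
    using \<pi> R(2) by blast+
qed (fact R(1))

lemma well_dominated_K2_corona:
  assumes "simple_graph VF EF"
  shows "well_dominated (dprod_verts (K_verts 2) (corona_verts VF))
                        (dprod_edges (K_edges 2) (corona_edges VF EF))"
proof -
  let ?V = "dprod_verts (K_verts 2) (corona_verts VF)"
  let ?E = "dprod_edges (K_edges 2) (corona_edges VF EF)"
  have "finite VF" "sym EF" using assms unfolding simple_graph_def by auto
  have V: "?V = {(i, (u, b)). i \<in> {0, 1} \<and> u \<in> VF}"
    by (auto simp: dprod_verts_def K_verts_def corona_verts_def)
  define \<pi> where "\<pi> x = (case x of (i, (u, b)) \<Rightarrow> (1 - i, (u, \<not> b)))" for x :: "nat \<times> 'a \<times> bool"
  define R where "R = {(i, (u, b)). i \<in> {0::nat, 1} \<and> u \<in> VF \<and> b}"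
  have fin: "finite ?V"
    using \<open>finite VF\<close> by (simp add: dprod_verts_def K_verts_def corona_verts_def)
  have sym: "sym ?E"
    by (rule symI) (use \<open>sym EF\<close> in \<open>auto simp: K_edges_def dprod_edges_def dest: symD\<close>)
  have irrefl: "irrefl ?E" by (auto simp: irrefl_def K_edges_def dprod_edges_def)
  have \<pi>: "\<pi> v \<in> ?V \<and> \<pi> (\<pi> v) = v \<and> (v, \<pi> v) \<in> ?E" if "v \<in> ?V" for v
    using that unfolding V by (auto simp: \<pi>_def K_edges_def)
  have leaf: "(\<forall>x. (x, v) \<in> ?E \<longrightarrow> x = \<pi> v) \<or> (\<forall>x. (x, \<pi> v) \<in> ?E \<longrightarrow> x = v)"
    if "v \<in> ?V" for v
  proof -
    obtain i u b where v: "v = (i, (u, b))" "i \<in> {0, 1}" "u \<in> VF" using \<open>v \<in> ?V\<close> V by blast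
    have "x = \<pi> v" if "(x, v) \<in> ?E" "b" for x
      using that v by (cases x) (auto simp: \<pi>_def K_edges_def)
    moreover have "x = v" if "(x, \<pi> v) \<in> ?E" "\<not> b" for x
      using that v by (cases x) (auto simp: \<pi>_def K_edges_def)
    ultimately show ?thesis by blast
  qed
  have R: "v \<in> R \<longleftrightarrow> \<pi> v \<notin> R" if "v \<in> ?V" for v
    using that unfolding V by (auto simp: \<pi>_def R_def)
  have "R \<subseteq> ?V" by (auto simp: R_def V)
  show ?thesis
    using well_dominatedI[OF fin minimal_dominating_card_pendant_pairs[OF sym irrefl \<pi> leaf \<open>R \<subseteq> ?V\<close> R]] .
qed

section \<open>Products of graphs without isolated vertices\<close>

definition private_nbrs :: "'a set \<Rightarrow> ('a \<times> 'a) set \<Rightarrow> 'a set \<Rightarrow> 'a \<Rightarrow> 'a set" where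
  "private_nbrs V E A a = {p \<in> V - A. (a, p) \<in> E \<and> (\<forall>a'\<in>A. (a', p) \<in> E \<longrightarrow> a' = a)}"

lemma private_nbrs_cover:
  assumes "finite V" "A \<subseteq> V" "card V = card A * (1 + k)"
    and card_pn: "\<And>a. a \<in> A \<Longrightarrow> card (private_nbrs V E A a) = k"
  shows "V - A = (\<Union>a\<in>A. private_nbrs V E A a)"
proof (rule sym, rule card_subset_eq)
  show "finite (V - A)" using \<open>finite V\<close> by simp
  show "(\<Union>a\<in>A. private_nbrs V E A a) \<subseteq> V - A" unfolding private_nbrs_def by blast
  have "finite A" using assms(1,2) finite_subset by blast
  moreover have "finite (private_nbrs V E A a)" for a
    using \<open>finite V\<close> unfolding private_nbrs_def by simp
  moreover have "\<forall>a\<in>A. \<forall>b\<in>A. a \<noteq> b \<longrightarrow> private_nbrs V E A a \<inter> private_nbrs V E A b = {}"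
    unfolding private_nbrs_def by blast
  ultimately have "card (\<Union>a\<in>A. private_nbrs V E A a) = (\<Sum>a\<in>A. card (private_nbrs V E A a))"
    by (simp add: card_UN_disjoint)
  also have "\<dots> = card A * k" using card_pn by simp
  also have "\<dots> = card (V - A)" using assms(1-3) by (simp add: card_Diff_subset finite_subset)
  finally show "card (\<Union>a\<in>A. private_nbrs V E A a) = card (V - A)" .
qed

lemma minimal_dominating_complete_dprod:
  assumes EG: "\<And>u w. (u, w) \<in> EG \<longleftrightarrow> u \<in> VG \<and> w \<in> VG \<and> u \<noteq> w"
    and EH: "\<And>u w. (u, w) \<in> EH \<longleftrightarrow> u \<in> VH \<and> w \<in> VH \<and> u \<noteq> w"
    and "{a, x, u} \<subseteq> VG" "a \<noteq> x" "a \<noteq> u" "x \<noteq> u"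
    and "{b, y, t} \<subseteq> VH" "b \<noteq> y" "b \<noteq> t" "y \<noteq> t"
  shows "minimal_dominating (dprod_verts VG VH) (dprod_edges EG EH) {(a, b), (a, y), (x, b)}"
  unfolding minimal_dominating_iff_remove
proof (intro conjI ballI)
  have E: "((p1, p2), (q1, q2)) \<in> dprod_edges EG EH \<longleftrightarrow>
      p1 \<in> VG \<and> q1 \<in> VG \<and> p1 \<noteq> q1 \<and> p2 \<in> VH \<and> q2 \<in> VH \<and> p2 \<noteq> q2" for p1 p2 q1 q2
    using EG EH by simp
  show "dominating (dprod_verts VG VH) (dprod_edges EG EH) {(a, b), (a, y), (x, b)}"
    unfolding dominating_def dprod_verts_def
  proof (intro conjI ballI)
    show "{(a, b), (a, y), (x, b)} \<subseteq> VG \<times> VH" using assms by blast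
    fix p assume "p \<in> VG \<times> VH"
    then obtain g k where p: "p = (g, k)" "g \<in> VG" "k \<in> VH" by blast
    consider "g = a" "k = b \<or> k = y" | "g = a" "k \<noteq> b" "k \<noteq> y" | "g = x" "k = b"
      | "g \<noteq> a" "g \<noteq> x" "k = b" | "g \<noteq> a" "k \<noteq> b" by blast
    then show "p \<in> {(a, b), (a, y), (x, b)} \<or> (\<exists>v\<in>{(a, b), (a, y), (x, b)}. (v, p) \<in> dprod_edges EG EH)"
      by cases (use p assms in \<open>auto simp: E\<close>)
  qed
  fix d assume "d \<in> {(a, b), (a, y), (x, b)}"
  then obtain q where "q \<in> dprod_verts VG VH" "q \<notin> {(a, b), (a, y), (x, b)} - {d}"
      "\<forall>v\<in>{(a, b), (a, y), (x, b)} - {d}. (v, q) \<notin> dprod_edges EG EH"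
  proof (elim insertE emptyE)
    assume "d = (a, b)" then show thesis using assms by (intro that[of "(a, b)"]) (auto simp: E dprod_verts_def)
  next
    assume "d = (a, y)" then show thesis using assms by (intro that[of "(u, b)"]) (auto simp: E dprod_verts_def)
  next
    assume "d = (x, b)" then show thesis using assms by (intro that[of "(a, t)"]) (auto simp: E dprod_verts_def)
  qed
  then show "\<not> dominating (dprod_verts VG VH) (dprod_edges EG EH) ({(a, b), (a, y), (x, b)} - {d})"
    unfolding dominating_def by blast
qed

locale graph_pair =
  fixes VG :: "'a set" and EG :: "('a \<times> 'a) set" and VH :: "'b set" and EH :: "('b \<times> 'b) set"
  assumes simple_G: "simple_graph VG EG" and simple_H: "simple_graph VH EH"
    and nbr_G: "\<And>v. v \<in> VG \<Longrightarrow> \<exists>u. (v, u) \<in> EG"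
    and nbr_H: "\<And>v. v \<in> VH \<Longrightarrow> \<exists>u. (v, u) \<in> EH"
begin

abbreviation "XV \<equiv> dprod_verts VG VH"
abbreviation "XE \<equiv> dprod_edges EG EH"

lemmas sym_G = simple_graph_sym[OF simple_G] and sym_H = simple_graph_sym[OF simple_H]
lemmas irrefl_G = simple_graph_irrefl[OF simple_G] and irrefl_H = simple_graph_irrefl[OF simple_H]
lemmas edge_G = simple_graph_edge_in[OF simple_G] and edge_H = simple_graph_edge_in[OF simple_H]

lemma finite_VG: "finite VG" and finite_VH: "finite VH"
  using simple_G simple_H unfolding simple_graph_def by auto

lemma dominated_by_nbr_column:
  assumes "(a, x) \<in> EG" "w \<in> VH"
  obtains w' where "w' \<in> VH" "((a, w'), (x, w)) \<in> XE"
proof -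
  obtain w' where w': "(w, w') \<in> EH" using nbr_H[OF assms(2)] by blast
  show thesis
  proof
    show "w' \<in> VH" using edge_H[OF w'] by blast
    show "((a, w'), (x, w)) \<in> XE" using assms(1) sym_H[OF w'] by simp
  qed
qed

lemma dominated_by_nbr_row:
  assumes "(b, w) \<in> EH" "x \<in> VG"
  obtains x' where "x' \<in> VG" "((x', b), (x, w)) \<in> XE"
proof -
  obtain x' where x': "(x, x') \<in> EG" using nbr_G[OF assms(2)] by blast
  show thesis
  proof
    show "x' \<in> VG" using edge_G[OF x'] by blast
    show "((x', b), (x, w)) \<in> XE" using assms(1) sym_G[OF x'] by simp
  qed
qed

lemma independent_dominating_column:
  assumes "independent_dominating VG EG A"
  shows "independent_dominating XV XE (A \<times> VH)"
  unfolding independent_dominating_def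
proof
  show "independent XE (A \<times> VH)"
    using assms unfolding independent_dominating_def independent_def by auto
  have "A \<subseteq> VG" using assms unfolding independent_dominating_def dominating_def by blast
  show "dominating XV XE (A \<times> VH)" unfolding dominating_def dprod_verts_def
  proof (intro conjI ballI)
    show "A \<times> VH \<subseteq> VG \<times> VH" using \<open>A \<subseteq> VG\<close> by blast
    fix p assume "p \<in> VG \<times> VH"
    then obtain x w where p: "p = (x, w)" "x \<in> VG" "w \<in> VH" by blast
    show "p \<in> A \<times> VH \<or> (\<exists>u\<in>A \<times> VH. (u, p) \<in> XE)"
    proof (cases "x \<in> A")
      case False
      then obtain a where "a \<in> A" "(a, x) \<in> EG"
        using assms p unfolding independent_dominating_def dominating_def by blast
      moreover obtain w' where "w' \<in> VH" "((a, w'), (x, w)) \<in> XE"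
        using dominated_by_nbr_column \<open>(a, x) \<in> EG\<close> \<open>w \<in> VH\<close> by blast
      ultimately show ?thesis using p by blast
    qed (use p in simp)
  qed
qed

lemma independent_dominating_row:
  assumes "independent_dominating VH EH B"
  shows "independent_dominating XV XE (VG \<times> B)"
  unfolding independent_dominating_def
proof
  show "independent XE (VG \<times> B)"
    using assms unfolding independent_dominating_def independent_def by auto
  have "B \<subseteq> VH" using assms unfolding independent_dominating_def dominating_def by blast
  show "dominating XV XE (VG \<times> B)" unfolding dominating_def dprod_verts_def
  proof (intro conjI ballI)
    show "VG \<times> B \<subseteq> VG \<times> VH" using \<open>B \<subseteq> VH\<close> by blast
    fix p assume "p \<in> VG \<times> VH"
    then obtain x w where p: "p = (x, w)" "x \<in> VG" "w \<in> VH" by blast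
    show "p \<in> VG \<times> B \<or> (\<exists>u\<in>VG \<times> B. (u, p) \<in> XE)"
    proof (cases "w \<in> B")
      case False
      then obtain b where "b \<in> B" "(b, w) \<in> EH"
        using assms p unfolding independent_dominating_def dominating_def by blast
      moreover obtain x' where "x' \<in> VG" "((x', b), (x, w)) \<in> XE"
        using dominated_by_nbr_row \<open>(b, w) \<in> EH\<close> \<open>x \<in> VG\<close> by blast
      ultimately show ?thesis using p by blast
    qed (use p in simp)
  qed
qed

lemma card_column_le:
  assumes "well_dominated XV XE" "independent_dominating VG EG A" "dominating XV XE D"
  shows "card (A \<times> VH) \<le> card D"
  using well_dominated_card_le[OF assms(1) independent_dominating_imp_minimal assms(3)]
    independent_dominating_column[OF assms(2)] .

lemma nonprivate_has_other_nbr: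
  assumes "independent_dominating VG EG A" "x \<in> VG - A" "x \<notin> private_nbrs VG EG A a"
  obtains a' where "a' \<in> A" "a' \<noteq> a" "(a', x) \<in> EG"
proof -
  obtain a' where "a' \<in> A" "(a', x) \<in> EG"
    using assms(1,2) unfolding independent_dominating_def dominating_def by blast
  with assms(2,3) that show thesis unfolding private_nbrs_def by blast
qed

lemma dominating_without_private_nbrs:
  assumes A: "independent_dominating VG EG A" and "a \<in> A" "private_nbrs VG EG A a = {}"
    and "(a, g) \<in> EG" "(y, z) \<in> EH" "(z, h) \<in> EH"
  shows "dominating XV XE (A \<times> VH - {(a, y), (a, h)} \<union> {(g, z)})" (is "dominating _ _ ?D")
  unfolding dominating_def dprod_verts_def
proof (intro conjI ballI)
  show "?D \<subseteq> VG \<times> VH"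
    using A edge_G[OF \<open>(a, g) \<in> EG\<close>] edge_H[OF \<open>(y, z) \<in> EH\<close>]
    unfolding independent_dominating_def dominating_def by blast
  fix p assume "p \<in> VG \<times> VH"
  then obtain x w where p: "p = (x, w)" "x \<in> VG" "w \<in> VH" by blast
  show "p \<in> ?D \<or> (\<exists>u\<in>?D. (u, p) \<in> XE)"
  proof (cases "x \<in> A")
    case True
    show ?thesis
    proof (cases "x = a \<and> (w = y \<or> w = h)")
      case True
      then have "((g, z), p) \<in> XE"
        using p sym_G[OF \<open>(a, g) \<in> EG\<close>] sym_H[OF \<open>(y, z) \<in> EH\<close>] \<open>(z, h) \<in> EH\<close> by auto
      then show ?thesis by blast
    qed (use \<open>x \<in> A\<close> p in blast)
  next
    case False
    with p \<open>private_nbrs VG EG A a = {}\<close> obtain a' where "a' \<in> A" "a' \<noteq> a" "(a', x) \<in> EG"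
      using nonprivate_has_other_nbr[OF A] by blast
    moreover obtain w' where "w' \<in> VH" "((a', w'), (x, w)) \<in> XE"
      using dominated_by_nbr_column \<open>(a', x) \<in> EG\<close> \<open>w \<in> VH\<close> by blast
    ultimately show ?thesis using p by blast
  qed
qed

lemma private_nbrs_nonempty:
  assumes wd: "well_dominated XV XE" and A: "independent_dominating VG EG A" and "a \<in> A"
    and "(y, z) \<in> EH" "(z, h) \<in> EH" "h \<noteq> y"
  shows "private_nbrs VG EG A a \<noteq> {}"
proof
  assume no_private: "private_nbrs VG EG A a = {}"
  have "A \<subseteq> VG" using A unfolding independent_dominating_def dominating_def by blast
  then obtain g where "(a, g) \<in> EG" using nbr_G \<open>a \<in> A\<close> by blast
  let ?D = "A \<times> VH - {(a, y), (a, h)} \<union> {(g, z)}"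
  have two: "{(a, y), (a, h)} \<subseteq> A \<times> VH" "card {(a, y), (a, h)} = 2"
    using \<open>a \<in> A\<close> edge_H \<open>(y, z) \<in> EH\<close> \<open>(z, h) \<in> EH\<close> \<open>h \<noteq> y\<close> by auto
  have "finite (A \<times> VH)" using \<open>A \<subseteq> VG\<close> finite_VG finite_VH finite_subset by blast
  then have "card (A \<times> VH - {(a, y), (a, h)}) = card (A \<times> VH) - 2"
    and "card (A \<times> VH) \<ge> 2"
    using card_Diff_subset[OF _ two(1)] card_mono[OF _ two(1)] two(2) by auto
  moreover have "card ?D \<le> card (A \<times> VH - {(a, y), (a, h)}) + 1"
    using card_Un_le[of _ "{(g, z)}"] by simp
  moreover have "card (A \<times> VH) \<le> card ?D"
    using card_column_le[OF wd A dominating_without_private_nbrs[OF A]]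
      \<open>a \<in> A\<close> no_private \<open>(a, g) \<in> EG\<close> assms(4,5) by blast
  ultimately show False by linarith
qed

lemma independent_private_exchange:
  assumes A: "independent_dominating VG EG A" and "a \<in> A" and B: "independent_dominating VH EH B"
  shows "independent XE ((A - {a}) \<times> VH \<union> ({a} \<union> private_nbrs VG EG A a) \<times> B)"
    (is "independent _ ?S")
  unfolding independent_def
proof (intro ballI)
  let ?P = "private_nbrs VG EG A a"
  have "?P \<subseteq> VG - A" unfolding private_nbrs_def by blast
  fix p q assume "p \<in> ?S" "q \<in> ?S"
  obtain x1 w1 x2 w2 where pq: "p = (x1, w1)" "q = (x2, w2)" by fastforce
  have "(x1, x2) \<notin> EG \<or> (w1, w2) \<notin> EH"
  proof (rule ccontr)
    assume "\<not> ?thesis"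
    then have e: "(x1, x2) \<in> EG" "(w1, w2) \<in> EH" by auto
    have "\<not> (x1 \<in> A \<and> x2 \<in> A)" "\<not> (w1 \<in> B \<and> w2 \<in> B)"
      using A B e unfolding independent_dominating_def independent_def by blast+
    moreover have "x1 = a" if "x1 \<in> A" "x2 \<in> ?P" using that e unfolding private_nbrs_def by blast
    moreover have "x2 = a" if "x2 \<in> A" "x1 \<in> ?P" using that sym_G[OF e(1)] unfolding private_nbrs_def by blast
    ultimately show False
      using \<open>p \<in> ?S\<close> \<open>q \<in> ?S\<close> pq \<open>a \<in> A\<close> \<open>?P \<subseteq> VG - A\<close> by blast
  qed
  then show "(p, q) \<notin> XE" using pq by auto
qed

lemma dominating_private_exchange:
  assumes A: "independent_dominating VG EG A" and "a \<in> A"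
    and B: "independent_dominating VH EH B" and "private_nbrs VG EG A a \<noteq> {}"
  shows "dominating XV XE ((A - {a}) \<times> VH \<union> ({a} \<union> private_nbrs VG EG A a) \<times> B)"
    (is "dominating _ _ ?S")
  unfolding dominating_def dprod_verts_def
proof (intro conjI ballI)
  let ?P = "private_nbrs VG EG A a"
  have "A \<subseteq> VG" "B \<subseteq> VH" "?P \<subseteq> VG - A"
    using A B unfolding independent_dominating_def dominating_def private_nbrs_def by auto
  show "?S \<subseteq> VG \<times> VH" using \<open>A \<subseteq> VG\<close> \<open>B \<subseteq> VH\<close> \<open>?P \<subseteq> VG - A\<close> \<open>a \<in> A\<close> by blast
  fix p assume "p \<in> VG \<times> VH"
  then obtain x w where p: "p = (x, w)" "x \<in> VG" "w \<in> VH" by blast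
  have B_dom: "\<exists>b\<in>B. (b, w) \<in> EH" if "w \<notin> B"
    using B p that unfolding independent_dominating_def dominating_def by blast
  consider "x \<in> A - {a}" | "x \<in> {a} \<union> ?P" | "x \<in> VG - A" "x \<notin> ?P"
    using p by blast
  then show "p \<in> ?S \<or> (\<exists>u\<in>?S. (u, p) \<in> XE)"
  proof cases
    case 1
    then show ?thesis using p by blast
  next
    case 2
    show ?thesis
    proof (cases "w \<in> B")
      case False
      then obtain b where "b \<in> B" "(b, w) \<in> EH" using B_dom by blast
      obtain y where "(y, x) \<in> EG" "y \<in> {a} \<union> ?P"
        using 2 \<open>private_nbrs VG EG A a \<noteq> {}\<close> sym_G unfolding private_nbrs_def by blast
      with \<open>b \<in> B\<close> \<open>(b, w) \<in> EH\<close> have "((y, b), p) \<in> XE" "(y, b) \<in> ?S" using p by auto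
      then show ?thesis by blast
    qed (use 2 p in blast)
  next
    case 3
    then obtain a' where "a' \<in> A" "a' \<noteq> a" "(a', x) \<in> EG"
      using nonprivate_has_other_nbr[OF A] by blast
    moreover obtain w' where "w' \<in> VH" "((a', w'), (x, w)) \<in> XE"
      using dominated_by_nbr_column \<open>(a', x) \<in> EG\<close> \<open>w \<in> VH\<close> by blast
    ultimately show ?thesis using p by blast
  qed
qed

lemma card_VH_eq_private_nbrs:
  assumes wd: "well_dominated XV XE" and A: "independent_dominating VG EG A" and "a \<in> A"
    and B: "independent_dominating VH EH B" and "private_nbrs VG EG A a \<noteq> {}"
  shows "card VH = card B * (1 + card (private_nbrs VG EG A a))"
proof -
  let ?P = "private_nbrs VG EG A a"
  have "A \<subseteq> VG" "B \<subseteq> VH" "?P \<subseteq> VG - A"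
    using A B unfolding independent_dominating_def dominating_def private_nbrs_def by auto
  then have fin: "finite A" "finite B" "finite ?P"
    using finite_VG finite_VH finite_subset by blast+
  have "card (A \<times> VH) = card ((A - {a}) \<times> VH \<union> ({a} \<union> ?P) \<times> B)"
    using well_dominated_card_eq[OF wd] independent_dominating_imp_minimal
      independent_dominating_column[OF A] independent_private_exchange[OF A \<open>a \<in> A\<close> B]
      dominating_private_exchange[OF assms(2-5)]
    unfolding independent_dominating_def by blast
  also have "\<dots> = card ((A - {a}) \<times> VH) + card (({a} \<union> ?P) \<times> B)"
    using fin finite_VH \<open>?P \<subseteq> VG - A\<close> by (intro card_Un_disjoint) auto
  also have "\<dots> = (card A - 1) * card VH + (1 + card ?P) * card B"
    using fin \<open>a \<in> A\<close> \<open>?P \<subseteq> VG - A\<close> by (auto simp: card_cartesian_product card_insert_if)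
  finally have "card A * card VH = (card A - 1) * card VH + (1 + card ?P) * card B"
    by (simp add: card_cartesian_product)
  moreover have "card A = Suc (card (A - {a}))" using card_Suc_Diff1[OF fin(1) \<open>a \<in> A\<close>] ..
  ultimately show ?thesis by (simp add: algebra_simps)
qed

lemma triangle_closed_if_path3:
  assumes wd: "well_dominated XV XE" and "(y, z) \<in> EH" "(z, h) \<in> EH" "h \<noteq> y"
    and "(v, x) \<in> EG" "(v, w) \<in> EG" "x \<noteq> w"
  shows "(x, w) \<in> EG"
proof (rule ccontr)
  assume "(x, w) \<notin> EG"
  then have "independent EG {x, w}"
    using sym_G irrefl_G unfolding independent_def by blast
  moreover have "{x, w} \<subseteq> VG" using edge_G assms(5,6) by blast
  ultimately obtain A where "{x, w} \<subseteq> A" and A: "independent_dominating VG EG A"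
    using independent_extends_to_independent_dominating[OF simple_G] by blast
  obtain B where B: "independent_dominating VH EH B"
    using independent_dominating_exists[OF simple_H] by blast
  have "A \<subseteq> VG" "B \<subseteq> VH" using A B unfolding independent_dominating_def dominating_def by auto
  have "B \<noteq> {}" using B edge_H[OF \<open>(y, z) \<in> EH\<close>]
    unfolding independent_dominating_def dominating_def by blast
  then have "card B > 0" using \<open>B \<subseteq> VH\<close> finite_VH finite_subset by (blast intro: card_gt_0_iff[THEN iffD2])
  define k where "k = card (private_nbrs VG EG A x)"
  have card_VH: "card VH = card B * (1 + card (private_nbrs VG EG A a))" if "a \<in> A" for a
    using card_VH_eq_private_nbrs[OF wd A that B] private_nbrs_nonempty[OF wd A that assms(2-4)] .
  then have "card (private_nbrs VG EG A a) = k" if "a \<in> A" for a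
    using that \<open>{x, w} \<subseteq> A\<close> \<open>card B > 0\<close> unfolding k_def by (metis insert_subset mult_left_cancel
      add_left_cancel less_not_refl)
  moreover have "card VG = card A * (1 + k)"
  proof -
    have "card (A \<times> VH) = card (VG \<times> B)"
      using well_dominated_card_eq[OF wd] independent_dominating_imp_minimal
        independent_dominating_column[OF A] independent_dominating_row[OF B] by blast
    then have "card A * (1 + k) * card B = card VG * card B"
      using card_VH[of x] \<open>{x, w} \<subseteq> A\<close> unfolding k_def
      by (simp add: card_cartesian_product algebra_simps)
    then have "card A * (1 + k) = card VG"
      by (rule mult_right_cancel[THEN iffD1, rotated]) (use \<open>card B > 0\<close> in simp)
    then show ?thesis by simp
  qed
  ultimately have "VG - A = (\<Union>a\<in>A. private_nbrs VG EG A a)"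
    using private_nbrs_cover[OF finite_VG \<open>A \<subseteq> VG\<close>] by blast
  moreover have "v \<in> VG - A"
    using edge_G[OF assms(5)] assms(5) \<open>{x, w} \<subseteq> A\<close> A
    unfolding independent_dominating_def independent_def by blast
  ultimately obtain a where "a \<in> A" "v \<in> private_nbrs VG EG A a" by blast
  then show False
    using sym_G[OF assms(5)] sym_G[OF assms(6)] \<open>{x, w} \<subseteq> A\<close> \<open>x \<noteq> w\<close>
    unfolding private_nbrs_def by blast
qed

lemma complete_if_path3:
  assumes "well_dominated XV XE" "connected_graph VG EG" "(y, z) \<in> EH" "(z, h) \<in> EH" "h \<noteq> y"
  shows "\<forall>u\<in>VG. \<forall>w\<in>VG. u \<noteq> w \<longrightarrow> (u, w) \<in> EG"
  using complete_if_triangle_closed[OF assms(2)] triangle_closed_if_path3[OF assms(1,3-5)]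
    simple_G unfolding simple_graph_def by blast

lemma complete_dprod_card_3:
  assumes wd: "well_dominated XV XE"
    and complete_G: "\<forall>u\<in>VG. \<forall>w\<in>VG. u \<noteq> w \<longrightarrow> (u, w) \<in> EG"
    and complete_H: "\<forall>u\<in>VH. \<forall>w\<in>VH. u \<noteq> w \<longrightarrow> (u, w) \<in> EH"
    and "card VG \<ge> 3" "card VH \<ge> 3"
  shows "card VG = 3 \<and> card VH = 3"
proof -
  have EG: "(u, w) \<in> EG \<longleftrightarrow> u \<in> VG \<and> w \<in> VG \<and> u \<noteq> w" for u w
    using complete_G edge_G irrefl_G by blast
  have EH: "(u, w) \<in> EH \<longleftrightarrow> u \<in> VH \<and> w \<in> VH \<and> u \<noteq> w" for u w
    using complete_H edge_H irrefl_H by blast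
  obtain a x u where "{a, x, u} \<subseteq> VG" "a \<noteq> x" "a \<noteq> u" "x \<noteq> u"
    using \<open>card VG \<ge> 3\<close> by (auto simp: numeral_3_eq_3 card_le_Suc_iff)
  moreover obtain b y t where "{b, y, t} \<subseteq> VH" "b \<noteq> y" "b \<noteq> t" "y \<noteq> t"
    using \<open>card VH \<ge> 3\<close> by (auto simp: numeral_3_eq_3 card_le_Suc_iff)
  ultimately have min3: "minimal_dominating XV XE {(a, b), (a, y), (x, b)}"
    and "card {(a, b), (a, y), (x, b)} = 3"
    using minimal_dominating_complete_dprod[OF EG EH] by auto
  moreover have "independent_dominating VG EG {a}" "independent_dominating VH EH {b}"
    using \<open>{a, x, u} \<subseteq> VG\<close> \<open>{b, y, t} \<subseteq> VH\<close>
    by (auto simp: EG EH intro: independent_dominating_universal_vertex)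
  ultimately have "card ({a} \<times> VH) = 3" "card (VG \<times> {b}) = 3"
    using well_dominated_card_eq[OF wd _ min3] independent_dominating_imp_minimal
      independent_dominating_column independent_dominating_row by metis+
  then show ?thesis by (simp add: card_cartesian_product)
qed

lemma independent_dominating_K2_vertex:
  assumes "VG = {g0, g1}" "(g0, g1) \<in> EG"
  shows "independent_dominating VG EG {g0}"
  using assms irrefl_G by (intro independent_dominating_universal_vertex) auto

lemma independent_dominating_K2_leaves:
  assumes K2: "VG = {g0, g1}" "(g0, g1) \<in> EG" and l: "\<forall>x. (l, x) \<in> EH \<longleftrightarrow> x = v"
  defines "L \<equiv> {l \<in> VH. \<forall>x. (l, x) \<in> EH \<longleftrightarrow> x = v}"
  shows "independent_dominating XV XE ({g0} \<times> (VH - {v}) \<union> {g1} \<times> L)" (is "independent_dominating _ _ ?S")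
  unfolding independent_dominating_def
proof
  have L_nbr: "x = v" if "m \<in> L" "(x, m) \<in> EH \<or> (m, x) \<in> EH" for x m
    using that sym_H unfolding L_def by blast
  show "independent XE ?S"
    unfolding independent_def using irrefl_G by (auto dest: L_nbr)
  show "dominating XV XE ?S" unfolding dominating_def dprod_verts_def
  proof (intro conjI ballI)
    show "?S \<subseteq> VG \<times> VH" using K2 unfolding L_def by blast
    fix p assume "p \<in> VG \<times> VH"
    then obtain x w where p: "p = (x, w)" "x = g0 \<or> x = g1" "w \<in> VH" using K2 by blast
    have g10: "(g1, g0) \<in> EG" using sym_G[OF K2(2)] .
    show "p \<in> ?S \<or> (\<exists>u\<in>?S. (u, p) \<in> XE)"
    proof (cases "x = g0 \<and> w = v \<or> x = g1 \<and> w \<notin> L")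
      case True
      then show ?thesis
      proof
        assume "x = g0 \<and> w = v"
        moreover have "l \<in> L" using l edge_H unfolding L_def by blast
        ultimately have "(g1, l) \<in> ?S" "((g1, l), p) \<in> XE" using p l g10 by auto
        then show ?thesis by blast
      next
        assume x: "x = g1 \<and> w \<notin> L"
        obtain w' where "(w, w') \<in> EH" using nbr_H p(3) by blast
        then obtain w'' where "(w, w'') \<in> EH" "w'' \<noteq> v"
          using x p(3) unfolding L_def by blast
        then have "(g0, w'') \<in> ?S" "((g0, w''), p) \<in> XE"
          using p x K2(2) edge_H[of w w''] sym_H[of w w''] by auto
        then show ?thesis by blast
      qed
    qed (use p in blast)
  qed
qed

lemma leaves_with_common_nbr_eq:
  assumes wd: "well_dominated XV XE" and K2: "VG = {g0, g1}" "(g0, g1) \<in> EG"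
    and l1: "\<forall>x. (l1, x) \<in> EH \<longleftrightarrow> x = v" and l2: "\<forall>x. (l2, x) \<in> EH \<longleftrightarrow> x = v"
  shows "l1 = l2"
proof (rule ccontr)
  assume "l1 \<noteq> l2"
  define L where "L = {l \<in> VH. \<forall>x. (l, x) \<in> EH \<longleftrightarrow> x = v}"
  have "v \<in> VH" "l1 \<in> L" "l2 \<in> L" using l1 l2 edge_H unfolding L_def by blast+
  have "g0 \<noteq> g1" using K2(2) irrefl_G by blast
  have "finite L" unfolding L_def using finite_VH by simp
  have "card ({g0} \<times> VH) = card ({g0} \<times> (VH - {v}) \<union> {g1} \<times> L)"
    using well_dominated_card_eq[OF wd independent_dominating_imp_minimal independent_dominating_imp_minimal,
        OF independent_dominating_column[OF independent_dominating_K2_vertex[OF K2]]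
        independent_dominating_K2_leaves[OF K2 l1]]
    unfolding L_def .
  also have "\<dots> = card (VH - {v}) + card L"
    using \<open>finite L\<close> finite_VH \<open>g0 \<noteq> g1\<close> by (subst card_Un_disjoint) (auto simp: card_cartesian_product)
  finally have "card VH = card VH - 1 + card L"
    using \<open>v \<in> VH\<close> finite_VH by (simp add: card_cartesian_product)
  moreover have "card L \<ge> 2"
    using card_mono[OF \<open>finite L\<close>, of "{l1, l2}"] \<open>l1 \<in> L\<close> \<open>l2 \<in> L\<close> \<open>l1 \<noteq> l2\<close> by simp
  moreover have "card VH \<ge> 1" using \<open>v \<in> VH\<close> finite_VH by (metis One_nat_def Suc_leI card_gt_0_iff empty_iff)
  ultimately show False by linarith
qed

lemma dominating_if_no_square_completion:
  assumes K2: "VG = {g0, g1}" "(g0, g1) \<in> EG" and "(v, u) \<in> EH" "(u, a) \<in> EH"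
    and no_leaf: "\<forall>w. (v, w) \<in> EH \<longrightarrow> \<not> leaf EH w"
    and no_square: "\<not> (\<exists>h. (a, h) \<in> EH \<and> h \<noteq> u \<and> (\<forall>x. (h, x) \<in> EH \<longrightarrow> x = a \<or> x = v))"
  shows "dominating XV XE ({g0} \<times> (VH - {v, a}) \<union> {(g1, u)})" (is "dominating _ _ ?D")
  unfolding dominating_def dprod_verts_def
proof (intro conjI ballI)
  show "?D \<subseteq> VG \<times> VH" using K2 edge_H[OF \<open>(v, u) \<in> EH\<close>] by blast
  fix p assume "p \<in> VG \<times> VH"
  then obtain x w where p: "p = (x, w)" "x = g0 \<or> x = g1" "w \<in> VH" using K2 by blast
  have g10: "(g1, g0) \<in> EG" using sym_G[OF K2(2)] .
  show "p \<in> ?D \<or> (\<exists>y\<in>?D. (y, p) \<in> XE)"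
  proof (cases "x = g0 \<and> (w = v \<or> w = a) \<or> x = g1 \<and> w \<noteq> u")
    case True
    then show ?thesis
    proof
      assume "x = g0 \<and> (w = v \<or> w = a)"
      then have "((g1, u), p) \<in> XE" using p g10 sym_H[OF \<open>(v, u) \<in> EH\<close>] \<open>(u, a) \<in> EH\<close> by auto
      then show ?thesis by blast
    next
      assume x: "x = g1 \<and> w \<noteq> u"
      obtain w' where "(w, w') \<in> EH" "w' \<noteq> v" "w' \<noteq> a"
      proof (rule ccontr)
        assume "\<not> thesis"
        then have nbrs: "(w, y) \<in> EH \<Longrightarrow> y = v \<or> y = a" for y using that by blast
        obtain z where "(w, z) \<in> EH" using nbr_H p(3) by blast
        show False
        proof (cases "(w, a) \<in> EH")
          case True
          then show False using no_square x nbrs sym_H[OF True] by blast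
        next
          case False
          then have "leaf EH w" "(v, w) \<in> EH"
            using nbrs \<open>(w, z) \<in> EH\<close> sym_H[of w v] unfolding leaf_def by metis+
          then show False using no_leaf by blast
        qed
      qed
      then have "(g0, w') \<in> ?D" "((g0, w'), p) \<in> XE"
        using p x K2(2) edge_H[of w w'] sym_H[of w w'] by auto
      then show ?thesis by blast
    qed
  qed (use p in blast)
qed

lemma square_completion:
  assumes wd: "well_dominated XV XE" and K2: "VG = {g0, g1}" "(g0, g1) \<in> EG"
    and "(v, u) \<in> EH" "(u, a) \<in> EH" "a \<noteq> v"
    and "\<forall>w. (v, w) \<in> EH \<longrightarrow> \<not> leaf EH w"
  shows "\<exists>h. (a, h) \<in> EH \<and> h \<noteq> u \<and> (\<forall>x. (h, x) \<in> EH \<longrightarrow> x = a \<or> x = v)"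
proof (rule ccontr)
  assume no_square: "\<not> ?thesis"
  let ?D = "{g0} \<times> (VH - {v, a}) \<union> {(g1, u)}"
  have "v \<in> VH" "a \<in> VH" using edge_H assms(4,5) by blast+
  then have "card VH \<ge> 2" using card_mono[OF finite_VH, of "{v, a}"] \<open>a \<noteq> v\<close> by simp
  have "card ({g0} \<times> VH) \<le> card ?D"
    using card_column_le[OF wd independent_dominating_K2_vertex[OF K2]
        dominating_if_no_square_completion[OF K2 assms(4,5,7) no_square]] .
  also have "\<dots> \<le> card (VH - {v, a}) + 1"
    using card_Un_le[of "{g0} \<times> (VH - {v, a})" "{(g1, u)}"] by (simp add: card_cartesian_product)
  also have "\<dots> = card VH - 1"
    using finite_VH \<open>v \<in> VH\<close> \<open>a \<in> VH\<close> \<open>a \<noteq> v\<close> \<open>card VH \<ge> 2\<close> by (simp add: card_Diff_subset)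
  finally show False using \<open>card VH \<ge> 2\<close> by (simp add: card_cartesian_product)
qed

end

lemma graph_pairI:
  assumes "simple_graph VG EG" "connected_graph VG EG" "card VG \<ge> 2"
    and "simple_graph VH EH" "connected_graph VH EH" "card VH \<ge> 2"
  shows "graph_pair VG EG VH EH"
proof
  show "\<exists>u. (v, u) \<in> EG" if "v \<in> VG" for v using connected_graph_has_nbr[OF assms(2,3) that] by blast
  show "\<exists>u. (v, u) \<in> EH" if "v \<in> VH" for v using connected_graph_has_nbr[OF assms(5,6) that] by blast
qed (fact assms)+

section \<open>Factors of well-dominated products with \<open>K\<^sub>2\<close>\<close>

text \<open>The two properties that well-dominatedness of \<open>K\<^sub>2 \<times> H\<close> imposes on \<open>H\<close>
  (lemmas \<open>leaves_with_common_nbr_eq\<close> and \<open>square_completion\<close>); they force \<open>H\<close> to be a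
  4-cycle or a corona.\<close>
locale K2_factor_graph =
  fixes V :: "'b set" and E :: "('b \<times> 'b) set"
  assumes simple: "simple_graph V E" and connected: "connected_graph V E" and two: "card V \<ge> 2"
    and leaf_support_unique:
      "\<And>v l1 l2. \<forall>x. (l1, x) \<in> E \<longleftrightarrow> x = v \<Longrightarrow> \<forall>x. (l2, x) \<in> E \<longleftrightarrow> x = v \<Longrightarrow> l1 = l2"
    and square_completion:
      "\<And>v u a. (v, u) \<in> E \<Longrightarrow> (u, a) \<in> E \<Longrightarrow> a \<noteq> v \<Longrightarrow> \<forall>w. (v, w) \<in> E \<longrightarrow> \<not> leaf E w
        \<Longrightarrow> \<exists>h. (a, h) \<in> E \<and> h \<noteq> u \<and> (\<forall>x. (h, x) \<in> E \<longrightarrow> x = a \<or> x = v)"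
begin
lemmas sym = simple_graph_sym[OF simple] and irrefl = simple_graph_irrefl[OF simple]
  and edge = simple_graph_edge_in[OF simple]

lemma leaf_free_if_leaf_free_nbhd:
  assumes "v0 \<in> V" "\<not> leaf E v0" "\<forall>w. (v0, w) \<in> E \<longrightarrow> \<not> leaf E w"
  shows "\<forall>v\<in>V. \<not> leaf E v"
proof -
  let ?W = "{v \<in> V. \<not> leaf E v \<and> (\<forall>w. (v, w) \<in> E \<longrightarrow> \<not> leaf E w)}"
  have "V \<subseteq> ?W"
  proof (rule connected_graph_closed_subset[OF connected])
    show "v0 \<in> ?W" "v0 \<in> V" using assms by blast+
    fix v u assume "v \<in> ?W" "(v, u) \<in> E"
    have "\<not> leaf E a" if "(u, a) \<in> E" for a
    proof
      assume "leaf E a"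
      then have "a \<noteq> v" using \<open>v \<in> ?W\<close> by blast
      then obtain h where "(a, h) \<in> E" "h \<noteq> u"
        using square_completion[OF \<open>(v, u) \<in> E\<close> \<open>(u, a) \<in> E\<close>] \<open>v \<in> ?W\<close> by blast
      with \<open>leaf E a\<close> sym[OF \<open>(u, a) \<in> E\<close>] show False using leaf_nbr_unique by metis
    qed
    then show "u \<in> ?W" using \<open>v \<in> ?W\<close> \<open>(v, u) \<in> E\<close> edge by blast
  qed
  then show ?thesis by blast
qed

lemma leaf_free_square:
  assumes no_leaf: "\<forall>v\<in>V. \<not> leaf E v"
  obtains v u a h where "(v, u) \<in> E" "(u, a) \<in> E" "(a, h) \<in> E" "(h, v) \<in> E" "a \<noteq> v" "h \<noteq> u"
    "\<forall>x. (v, x) \<in> E \<longrightarrow> x = u \<or> x = h" "\<forall>x. (u, x) \<in> E \<longrightarrow> x = v \<or> x = a"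
    "\<forall>x. (a, x) \<in> E \<longrightarrow> x = u \<or> x = h" "\<forall>x. (h, x) \<in> E \<longrightarrow> x = a \<or> x = v"
proof -
  have nl: "\<not> leaf E w" if "(x, w) \<in> E" for x w using no_leaf edge[OF that] by blast
  then have nl_nbhd: "\<forall>w. (x, w) \<in> E \<longrightarrow> \<not> leaf E w" for x by blast
  have other_nbr: "\<exists>y. (w, y) \<in> E \<and> y \<noteq> x" if "(w, x) \<in> E" for w x
    using nl[OF sym[OF that]] that unfolding leaf_def by blast
  have nbrs2: "(w, y) \<in> E" if "(w, x) \<in> E" "\<forall>z. (w, z) \<in> E \<longrightarrow> z = x \<or> z = y" for w x y
    using other_nbr[OF that(1)] that(2) by blast
  obtain v where "v \<in> V" using two by fastforce
  then obtain u where vu: "(v, u) \<in> E" using connected_graph_has_nbr[OF connected two] by blast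
  obtain a where ua: "(u, a) \<in> E" and "a \<noteq> v" using other_nbr[OF sym[OF vu]] by blast
  obtain h where ah: "(a, h) \<in> E" and "h \<noteq> u" and Nh: "\<forall>x. (h, x) \<in> E \<longrightarrow> x = a \<or> x = v"
    using square_completion[OF vu ua \<open>a \<noteq> v\<close> nl_nbhd] by blast
  have hv: "(h, v) \<in> E" using nbrs2[OF sym[OF ah] Nh] .
  text \<open>Every neighbour \<open>w \<noteq> h\<close> of \<open>v\<close> closes a square \<open>h v w a\<close>.\<close>
  have square_at_a: "(w, a) \<in> E \<and> (\<forall>x. (a, x) \<in> E \<longrightarrow> x = w \<or> x = h)"
    if vw: "(v, w) \<in> E" and "w \<noteq> h" for w
  proof -
    obtain h' where h': "(w, h') \<in> E" "h' \<noteq> v" "\<forall>x. (h', x) \<in> E \<longrightarrow> x = w \<or> x = h"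
      using square_completion[OF hv vw \<open>w \<noteq> h\<close> nl_nbhd] by blast
    have "(h', h) \<in> E" using nbrs2[OF sym[OF h'(1)] h'(3)] .
    then have "h' = a" using Nh sym h'(2) by blast
    then show ?thesis using h' by blast
  qed
  have Na: "\<forall>x. (a, x) \<in> E \<longrightarrow> x = u \<or> x = h" using square_at_a[OF vu \<open>h \<noteq> u\<close>[symmetric]] by blast
  have Nv: "\<forall>x. (v, x) \<in> E \<longrightarrow> x = u \<or> x = h" using square_at_a Na sym by blast
  obtain u' where "(a, u') \<in> E" "u' \<noteq> h" "\<forall>x. (u', x) \<in> E \<longrightarrow> x = a \<or> x = v"
    using square_completion[OF sym[OF hv] sym[OF ah] \<open>a \<noteq> v\<close> nl_nbhd] by blast
  then have Nu: "\<forall>x. (u, x) \<in> E \<longrightarrow> x = v \<or> x = a" using Na by blast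
  show thesis using that vu ua ah hv \<open>a \<noteq> v\<close> \<open>h \<noteq> u\<close> Nv Nu Na Nh by blast
qed

lemma iso_C4_if_leaf_free:
  assumes "\<forall>v\<in>V. \<not> leaf E v"
  shows "graph_iso V E (C_verts 4) (C_edges 4)"
proof -
  obtain v u a h where edges: "(v, u) \<in> E" "(u, a) \<in> E" "(a, h) \<in> E" "(h, v) \<in> E"
    and "a \<noteq> v" "h \<noteq> u"
    and N: "\<forall>x. (v, x) \<in> E \<longrightarrow> x = u \<or> x = h" "\<forall>x. (u, x) \<in> E \<longrightarrow> x = v \<or> x = a"
      "\<forall>x. (a, x) \<in> E \<longrightarrow> x = u \<or> x = h" "\<forall>x. (h, x) \<in> E \<longrightarrow> x = a \<or> x = v"
    using leaf_free_square[OF assms] by blast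
  have "v \<noteq> u" "u \<noteq> a" "a \<noteq> h" "h \<noteq> v" using edges irrefl by auto
  moreover have "V = {v, u, a, h}"
  proof
    show "V \<subseteq> {v, u, a, h}"
      by (rule connected_graph_closed_subset[OF connected]) (use N edges edge in blast)+
    show "{v, u, a, h} \<subseteq> V" using edges edge by blast
  qed
  moreover have "E = {(v, u), (u, v), (u, a), (a, u), (a, h), (h, a), (h, v), (v, h)}"
  proof
    show "E \<subseteq> {(v, u), (u, v), (u, a), (a, u), (a, h), (h, a), (h, v), (v, h)}"
    proof
      fix e assume "e \<in> E"
      moreover obtain x y where "e = (x, y)" by fastforce
      ultimately have "x \<in> {v, u, a, h}" using edge \<open>V = {v, u, a, h}\<close> by blast
      then show "e \<in> {(v, u), (u, v), (u, a), (a, u), (a, h), (h, a), (h, v), (v, h)}"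
        using N \<open>e \<in> E\<close> \<open>e = (x, y)\<close> by blast
    qed
    show "{(v, u), (u, v), (u, a), (a, u), (a, h), (h, a), (h, v), (v, h)} \<subseteq> E"
      using edges sym by blast
  qed
  ultimately show ?thesis using graph_iso_C4 \<open>a \<noteq> v\<close> \<open>h \<noteq> u\<close> by (metis (no_types))
qed

lemma leaf_pair_component:
  assumes "leaf E l" "leaf E n" "(l, n) \<in> E"
  shows "V = {l, n}"
proof
  have "(n, y) \<in> E \<longleftrightarrow> y = l" for y using leaf_nbr_unique[OF assms(2) sym[OF assms(3)]] .
  moreover have "(l, y) \<in> E \<longleftrightarrow> y = n" for y using leaf_nbr_unique[OF assms(1,3)] .
  ultimately show "V \<subseteq> {l, n}"
    using edge[OF assms(3)] by (intro connected_graph_closed_subset[OF connected, of l]) auto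
  show "{l, n} \<subseteq> V" using edge[OF assms(3)] by blast
qed

lemma leaf_nbr_not_leaf:
  assumes "\<not> (\<forall>v\<in>V. leaf E v)" "leaf E l" "(l, n) \<in> E"
  shows "\<not> leaf E n"
proof
  assume "leaf E n"
  then have "V = {l, n}" using leaf_pair_component assms(2,3) by blast
  then show False using assms(1,2) \<open>leaf E n\<close> by blast
qed

lemma pendant_matching:
  assumes "\<exists>l\<in>V. leaf E l"
  obtains S pend where "S \<subseteq> V" "S \<noteq> {}" "bij_betw pend S (V - S)"
    "\<And>s x. s \<in> S \<Longrightarrow> (pend s, x) \<in> E \<longleftrightarrow> x = s"
proof (cases "\<forall>v\<in>V. leaf E v")
  case True
  obtain h0 where "h0 \<in> V" "leaf E h0" using assms by blast
  then obtain h1 where h01: "(h0, h1) \<in> E" unfolding leaf_def by blast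
  then have "V = {h0, h1}" "h0 \<noteq> h1"
    using leaf_pair_component \<open>leaf E h0\<close> True edge irrefl by blast+
  moreover have "(h1, x) \<in> E \<longleftrightarrow> x = h0" for x
    using leaf_nbr_unique[OF _ sym[OF h01]] True edge[OF h01] by blast
  ultimately show thesis
    by (intro that[of "{h0}" "\<lambda>_. h1"]) (auto simp: bij_betw_def)
next
  case False
  define S where "S = {v \<in> V. \<not> leaf E v}"
  have "S \<noteq> {}" using False unfolding S_def by blast
  have has_leaf: "\<exists>l. (s, l) \<in> E \<and> leaf E l" if "s \<in> S" for s
    using leaf_free_if_leaf_free_nbhd[of s] that assms unfolding S_def by blast
  define pend where "pend s = (SOME l. (s, l) \<in> E \<and> leaf E l)" for s
  have pend: "(s, pend s) \<in> E" "leaf E (pend s)" if "s \<in> S" for s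
    using someI_ex[OF has_leaf[OF that]] unfolding pend_def by blast+
  have pend_nbr: "(pend s, x) \<in> E \<longleftrightarrow> x = s" if "s \<in> S" for s x
    using leaf_nbr_unique[OF pend(2)[OF that] sym[OF pend(1)[OF that]]] .
  have "bij_betw pend S (V - S)"
  proof (rule bij_betw_imageI)
    show "inj_on pend S" using pend_nbr by (metis inj_onI)
    show "pend ` S = V - S"
    proof
      show "pend ` S \<subseteq> V - S" using pend edge unfolding S_def by blast
      show "V - S \<subseteq> pend ` S"
      proof
        fix l assume "l \<in> V - S"
        then have "leaf E l" unfolding S_def by blast
        then obtain n where ln: "(l, n) \<in> E" unfolding leaf_def by blast
        then have "n \<in> S" using leaf_nbr_not_leaf \<open>leaf E l\<close> False edge unfolding S_def by blast
        have "\<forall>x. (l, x) \<in> E \<longleftrightarrow> x = n" using leaf_nbr_unique[OF \<open>leaf E l\<close> ln] by blast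
        then have "l = pend n" using leaf_support_unique pend_nbr[OF \<open>n \<in> S\<close>] by blast
        then show "l \<in> pend ` S" using \<open>n \<in> S\<close> by blast
      qed
    qed
  qed
  moreover have "S \<subseteq> V" unfolding S_def by blast
  ultimately show thesis using that \<open>S \<noteq> {}\<close> pend_nbr by blast
qed

lemma iso_corona_if_leaf:
  assumes "\<exists>l\<in>V. leaf E l"
  shows "\<exists>(VF :: nat set) EF. simple_graph VF EF \<and> connected_graph VF EF \<and>
           graph_iso V E (corona_verts VF) (corona_edges VF EF)"
proof -
  obtain S pend where S: "S \<subseteq> V" "S \<noteq> {}" and pend: "bij_betw pend S (V - S)"
    and pend_nbr: "\<And>s x. s \<in> S \<Longrightarrow> (pend s, x) \<in> E \<longleftrightarrow> x = s"
    using pendant_matching[OF assms] by blast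
  have "simple_graph S (E \<inter> S \<times> S)"
    using simple S(1) finite_subset unfolding simple_graph_def sym_def irrefl_def by blast
  moreover have "connected_graph S (E \<inter> S \<times> S)"
  proof (rule connected_graph_restrict_to_supports[OF simple connected S])
    fix w x assume "w \<in> V - S" "(w, x) \<in> E"
    then obtain s where "s \<in> S" "w = pend s" using pend unfolding bij_betw_def by blast
    then show "x \<in> S \<and> (\<forall>y. (w, y) \<in> E \<longrightarrow> y = x)" using pend_nbr[of s] \<open>(w, x) \<in> E\<close> by auto
  qed
  ultimately obtain VF :: "nat set" and EF where F: "simple_graph VF EF" "connected_graph VF EF"
    and "graph_iso VF EF S (E \<inter> S \<times> S)"
    by (rule simple_connected_graph_copy_on_nat)
  then have "graph_iso (corona_verts VF) (corona_edges VF EF) V E"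
    using graph_iso_trans graph_iso_corona_cong graph_iso_corona[OF simple S(1) pend pend_nbr] by blast
  then show ?thesis using F graph_iso_sym by blast
qed

end

section \<open>The characterisation\<close>

lemma well_dominated_K2_dprod_iso:
  assumes "simple_graph VG EG" "connected_graph VG EG" "card VG = 2"
    and "simple_graph VH EH" "connected_graph VH EH" "card VH \<ge> 2"
    and wd: "well_dominated (dprod_verts VG VH) (dprod_edges EG EH)"
  shows "graph_iso (dprod_verts VG VH) (dprod_edges EG EH)
                (dprod_verts (K_verts 2) (C_verts 4)) (dprod_edges (K_edges 2) (C_edges 4))
      \<or> (\<exists>(VF :: nat set) EF. simple_graph VF EF \<and> connected_graph VF EF \<and>
           graph_iso (dprod_verts VG VH) (dprod_edges EG EH)
                (dprod_verts (K_verts 2) (corona_verts VF))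
                (dprod_edges (K_edges 2) (corona_edges VF EF)))"
proof -
  interpret graph_pair VG EG VH EH by (rule graph_pairI) (use assms in auto)
  obtain g0 g1 where K2: "VG = {g0, g1}" "g0 \<noteq> g1" using \<open>card VG = 2\<close> by (meson card_2_iff)
  obtain u where "(g0, u) \<in> EG" using nbr_G K2 by blast
  then have g01: "(g0, g1) \<in> EG" using K2 edge_G irrefl_G by blast
  then have "\<forall>x\<in>VG. \<forall>y\<in>VG. x \<noteq> y \<longrightarrow> (x, y) \<in> EG" using K2 sym_G by blast
  then have iso_G: "graph_iso VG EG (K_verts 2) (K_edges 2)"
    using complete_graph_iso_K simple_G \<open>card VG = 2\<close> by blast
  interpret K2_factor_graph VH EH
    using assms(4-6) leaves_with_common_nbr_eq[OF wd K2(1) g01] square_completion[OF wd K2(1) g01]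
    by unfold_locales blast+
  show ?thesis
  proof (cases "\<exists>l\<in>VH. leaf EH l")
    case True
    then show ?thesis using iso_corona_if_leaf graph_iso_dprod[OF iso_G] by blast
  next
    case False
    then show ?thesis using iso_C4_if_leaf_free graph_iso_dprod[OF iso_G] by blast
  qed
qed

lemma well_dominated_dprod_K2_iso:
  assumes G: "simple_graph VG EG" "connected_graph VG EG" "card VG \<ge> 2"
    and H: "simple_graph VH EH" "connected_graph VH EH" "card VH = 2"
    and wd: "well_dominated (dprod_verts VG VH) (dprod_edges EG EH)"
  shows "graph_iso (dprod_verts VG VH) (dprod_edges EG EH)
                (dprod_verts (K_verts 2) (C_verts 4)) (dprod_edges (K_edges 2) (C_edges 4))
      \<or> (\<exists>(VF :: nat set) EF. simple_graph VF EF \<and> connected_graph VF EF \<and>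
           graph_iso (dprod_verts VG VH) (dprod_edges EG EH)
                (dprod_verts (K_verts 2) (corona_verts VF))
                (dprod_edges (K_edges 2) (corona_edges VF EF)))"
proof -
  have "finite VG" "finite VH" using G(1) H(1) unfolding simple_graph_def by auto
  have swap: "graph_iso (dprod_verts VG VH) (dprod_edges EG EH) (dprod_verts VH VG) (dprod_edges EH EG)"
    by (rule graph_iso_dprod_swap)
  from well_dominated_K2_dprod_iso[OF H G well_dominated_dprod_swap[OF \<open>finite VG\<close> \<open>finite VH\<close> wd]]
  show ?thesis by (elim disjE exE conjE; blast intro: graph_iso_trans[OF swap])
qed

lemma well_dominated_dprod_large_iso_K3_K3:
  assumes G: "simple_graph VG EG" "connected_graph VG EG" "card VG \<ge> 3"
    and H: "simple_graph VH EH" "connected_graph VH EH" "card VH \<ge> 3"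
    and wd: "well_dominated (dprod_verts VG VH) (dprod_edges EG EH)"
  shows "graph_iso (dprod_verts VG VH) (dprod_edges EG EH)
                (dprod_verts (K_verts 3) (K_verts 3)) (dprod_edges (K_edges 3) (K_edges 3))"
proof -
  interpret GH: graph_pair VG EG VH EH by (rule graph_pairI) (use assms in auto)
  interpret HG: graph_pair VH EH VG EG by (rule graph_pairI) (use assms in auto)
  have wd': "well_dominated (dprod_verts VH VG) (dprod_edges EH EG)"
    using well_dominated_dprod_swap[OF GH.finite_VG GH.finite_VH wd] .
  obtain y z h where "(y, z) \<in> EH" "(z, h) \<in> EH" "h \<noteq> y" using connected_graph_path3[OF H] .
  then have complete_G: "\<forall>u\<in>VG. \<forall>w\<in>VG. u \<noteq> w \<longrightarrow> (u, w) \<in> EG"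
    using GH.complete_if_path3[OF wd G(2)] by blast
  obtain y z h where "(y, z) \<in> EG" "(z, h) \<in> EG" "h \<noteq> y" using connected_graph_path3[OF G] .
  then have complete_H: "\<forall>u\<in>VH. \<forall>w\<in>VH. u \<noteq> w \<longrightarrow> (u, w) \<in> EH"
    using HG.complete_if_path3[OF wd' H(2)] by blast
  have "card VG = 3" "card VH = 3"
    using GH.complete_dprod_card_3[OF wd complete_G complete_H G(3) H(3)] by auto
  then show ?thesis
    using graph_iso_dprod[OF complete_graph_iso_K[OF G(1) complete_G] complete_graph_iso_K[OF H(1) complete_H]]
    by simp
qed

theorem theorem2:
  fixes VG :: "'a set" and EG :: "('a \<times> 'a) set"
    and VH :: "'b set" and EH :: "('b \<times> 'b) set"
  assumes "simple_graph VG EG" and "connected_graph VG EG" and "card VG \<ge> 2"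
    and "simple_graph VH EH" and "connected_graph VH EH" and "card VH \<ge> 2"
  shows "well_dominated (dprod_verts VG VH) (dprod_edges EG EH) \<longleftrightarrow>
     (graph_iso (dprod_verts VG VH) (dprod_edges EG EH)
                (dprod_verts (K_verts 3) (K_verts 3)) (dprod_edges (K_edges 3) (K_edges 3))
      \<or> graph_iso (dprod_verts VG VH) (dprod_edges EG EH)
                (dprod_verts (K_verts 2) (C_verts 4)) (dprod_edges (K_edges 2) (C_edges 4))
      \<or> (\<exists>(VF :: nat set) EF. simple_graph VF EF \<and> connected_graph VF EF \<and>
           graph_iso (dprod_verts VG VH) (dprod_edges EG EH)
                (dprod_verts (K_verts 2) (corona_verts VF))
                (dprod_edges (K_edges 2) (corona_edges VF EF))))"
proof (rule iffI, goal_cases)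
  case wd: 1
  from assms(3,6) consider "card VG \<ge> 3" "card VH \<ge> 3" | "card VG = 2" | "card VH = 2" by linarith
  then show ?case
  proof cases
    case 1
    then show ?thesis using well_dominated_dprod_large_iso_K3_K3 assms wd by blast
  next
    case 2
    then show ?thesis using well_dominated_K2_dprod_iso assms wd by blast
  next
    case 3
    then show ?thesis using well_dominated_dprod_K2_iso assms wd by blast
  qed
next
  case iso: 2
  have "finite (dprod_verts VG VH)"
    using assms(1,4) unfolding simple_graph_def dprod_verts_def by simp
  with iso show ?case
    by (elim disjE exE conjE) (blast intro: well_dominated_graph_iso well_dominated_K3_K3
        well_dominated_K2_C4 well_dominated_K2_corona)+
qed

end
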